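(* Let $X$ be a nontrivial real Hausdorff locally convex space, let $g\in\Gamma(X)$ be sublinear, and let $x^{\ast}\in\partial g(0)$. Let $L_g:=\{x\in X: g(x)=\langle x,x^{\ast}\rangle,\ g(-x)=-\langle x,x^{\ast}\rangle\}$ (a closed linear subspace independent of the choice of $x^{\ast}\in\partial g(0)$), $\widehat{X}:=X/L_g$ with the quotient topology, and define $\widehat{g}_{x^{\ast}}:\widehat{X}\to\mathbb{R}\cup\{\pm\infty\}$ by $\widehat{g}_{x^{\ast}}(\widehat{x}):=g(x)-\langle x,x^{\ast}\rangle$ (this is well defined). Then $\widehat{g}_{x^{\ast}}$ is a proper lower semicontinuous sublinear function with $\widehat{g}_{x^{\ast}}\ge0$ and $L_{\widehat{g}_{x^{\ast}}}=\{\widehat{0}\}$. Moreover, $x^{\ast}\in\operatorname{qri}\partial g(0)$ if and only if $0\in\operatorname{qi}\partial\widehat{g}_{x^{\ast}}(\widehat{0})$.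
   Context: $X^{\ast}$ is the topological dual of $X$ with the weak$^{\ast}$ topology; similarly $(\widehat{X})^{\ast}$ carries its weak$^{\ast}$ topology, and closures in dual spaces are weak$^{\ast}$ closures. $\Gamma(X)$ is the set of proper lower semicontinuous convex functions. For a proper lsc sublinear $k$ on a locally convex space $V$: $\partial k(0)=\{v^{\ast}\in V^{\ast}: v^{\ast}\le k\}$ and $L_k:=\{v\in V: k(v)=\langle v,u^{\ast}\rangle,\ k(-v)=-\langle v,u^{\ast}\rangle\}$ for any $u^{\ast}\in\partial k(0)$ (independent of this choice). For convex $B\subset V^{\ast}$: $\operatorname{qri}B=\{b\in B:\overline{\mathbb{R}_+(B-b)}\text{ is a linear subspace}\}$ and $\operatorname{qi}B=\{b\in B:\overline{\mathbb{R}_+(B-b)}=V^{\ast}\}$. *)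

theory Defs
  imports "HOL-Analysis.Analysis"
begin

text \<open>A real vector space with a topology, presented on an explicit carrier set.
  This is needed because the quotient space X/L is built as a set of cosets.\<close>
record 'v tvs =
  vcarrier :: "'v set"
  vadd :: "'v \<Rightarrow> 'v \<Rightarrow> 'v"
  vscale :: "real \<Rightarrow> 'v \<Rightarrow> 'v"
  vzero :: "'v"
  vtop :: "'v topology"

definition vneg :: "('v, 'm) tvs_scheme \<Rightarrow> 'v \<Rightarrow> 'v" where
  "vneg V v = vscale V (-1) v"

definition vspace_axioms :: "('v, 'm) tvs_scheme \<Rightarrow> bool" where
  "vspace_axioms V \<longleftrightarrow>
     vzero V \<in> vcarrier V \<and>
     (\<forall>u\<in>vcarrier V. \<forall>v\<in>vcarrier V. vadd V u v \<in> vcarrier V) \<and>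
     (\<forall>c. \<forall>v\<in>vcarrier V. vscale V c v \<in> vcarrier V) \<and>
     (\<forall>u\<in>vcarrier V. \<forall>v\<in>vcarrier V. \<forall>w\<in>vcarrier V.
         vadd V (vadd V u v) w = vadd V u (vadd V v w)) \<and>
     (\<forall>u\<in>vcarrier V. \<forall>v\<in>vcarrier V. vadd V u v = vadd V v u) \<and>
     (\<forall>v\<in>vcarrier V. vadd V v (vzero V) = v) \<and>
     (\<forall>v\<in>vcarrier V. vadd V v (vneg V v) = vzero V) \<and>
     (\<forall>a. \<forall>u\<in>vcarrier V. \<forall>v\<in>vcarrier V.
         vscale V a (vadd V u v) = vadd V (vscale V a u) (vscale V a v)) \<and>
     (\<forall>a b. \<forall>v\<in>vcarrier V. vscale V (a + b) v = vadd V (vscale V a v) (vscale V b v)) \<and>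
     (\<forall>a b. \<forall>v\<in>vcarrier V. vscale V a (vscale V b v) = vscale V (a * b) v) \<and>
     (\<forall>v\<in>vcarrier V. vscale V 1 v = v)"

definition vconvex :: "('v, 'm) tvs_scheme \<Rightarrow> 'v set \<Rightarrow> bool" where
  "vconvex V W \<longleftrightarrow> (\<forall>u\<in>W. \<forall>v\<in>W. \<forall>t\<in>{0..1}.
      vadd V (vscale V t u) (vscale V (1 - t) v) \<in> W)"

definition is_hlcs :: "('v, 'm) tvs_scheme \<Rightarrow> bool" where
  "is_hlcs V \<longleftrightarrow>
     vspace_axioms V \<and>
     topspace (vtop V) = vcarrier V \<and>
     continuous_map (prod_topology (vtop V) (vtop V)) (vtop V) (\<lambda>(u, v). vadd V u v) \<and>
     continuous_map (prod_topology euclideanreal (vtop V)) (vtop V) (\<lambda>(c, v). vscale V c v) \<and>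
     Hausdorff_space (vtop V) \<and>
     (\<forall>U. openin (vtop V) U \<and> vzero V \<in> U \<longrightarrow>
        (\<exists>W. openin (vtop V) W \<and> vzero V \<in> W \<and> W \<subseteq> U \<and> vconvex V W))"

definition Xs :: "'a::real_vector topology \<Rightarrow> 'a tvs" where
  "Xs T = \<lparr>vcarrier = UNIV, vadd = (+), vscale = (*\<^sub>R), vzero = 0, vtop = T\<rparr>"

definition vproper :: "('v, 'm) tvs_scheme \<Rightarrow> ('v \<Rightarrow> ereal) \<Rightarrow> bool" where
  "vproper V k \<longleftrightarrow> (\<forall>v\<in>vcarrier V. k v \<noteq> -\<infinity>) \<and> (\<exists>v\<in>vcarrier V. k v \<noteq> \<infinity>)"

definition vlsc :: "('v, 'm) tvs_scheme \<Rightarrow> ('v \<Rightarrow> ereal) \<Rightarrow> bool" where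
  "vlsc V k \<longleftrightarrow> (\<forall>t::ereal. openin (vtop V) {v \<in> topspace (vtop V). t < k v})"

definition vconvex_fun :: "('v, 'm) tvs_scheme \<Rightarrow> ('v \<Rightarrow> ereal) \<Rightarrow> bool" where
  "vconvex_fun V k \<longleftrightarrow> (\<forall>u\<in>vcarrier V. \<forall>v\<in>vcarrier V. \<forall>t::real. 0 < t \<and> t < 1 \<longrightarrow>
      k (vadd V (vscale V t u) (vscale V (1 - t) v)) \<le> ereal t * k u + ereal (1 - t) * k v)"

definition Gamma :: "('v, 'm) tvs_scheme \<Rightarrow> ('v \<Rightarrow> ereal) \<Rightarrow> bool" where
  "Gamma V k \<longleftrightarrow> vproper V k \<and> vlsc V k \<and> vconvex_fun V k"

definition vsublinear :: "('v, 'm) tvs_scheme \<Rightarrow> ('v \<Rightarrow> ereal) \<Rightarrow> bool" where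
  "vsublinear V k \<longleftrightarrow>
     k (vzero V) = 0 \<and>
     (\<forall>t::real. \<forall>v\<in>vcarrier V. 0 < t \<longrightarrow> k (vscale V t v) = ereal t * k v) \<and>
     (\<forall>u\<in>vcarrier V. \<forall>v\<in>vcarrier V. k (vadd V u v) \<le> k u + k v)"

definition vlinear_fun :: "('v, 'm) tvs_scheme \<Rightarrow> ('v \<Rightarrow> real) \<Rightarrow> bool" where
  "vlinear_fun V f \<longleftrightarrow>
     (\<forall>u\<in>vcarrier V. \<forall>v\<in>vcarrier V. f (vadd V u v) = f u + f v) \<and>
     (\<forall>c. \<forall>v\<in>vcarrier V. f (vscale V c v) = c * f v)"

text \<open>Continuous linear functionals, represented extensionally (undefined off the carrier).\<close>
definition vdual :: "('v, 'm) tvs_scheme \<Rightarrow> ('v \<Rightarrow> real) set" where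
  "vdual V = {f. f \<in> extensional (vcarrier V) \<and> vlinear_fun V f \<and>
                 continuous_map (vtop V) euclideanreal f}"

definition wstar :: "('v, 'm) tvs_scheme \<Rightarrow> ('v \<Rightarrow> real) topology" where
  "wstar V = subtopology (product_topology (\<lambda>_. euclideanreal) (vcarrier V)) (vdual V)"

definition dzero :: "('v, 'm) tvs_scheme \<Rightarrow> 'v \<Rightarrow> real" where
  "dzero V = restrict (\<lambda>_. 0) (vcarrier V)"

definition dual_subspace :: "('v, 'm) tvs_scheme \<Rightarrow> ('v \<Rightarrow> real) set \<Rightarrow> bool" where
  "dual_subspace V M \<longleftrightarrow> M \<subseteq> vdual V \<and> dzero V \<in> M \<and>
     (\<forall>f\<in>M. \<forall>h\<in>M. restrict (\<lambda>v. f v + h v) (vcarrier V) \<in> M) \<and>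
     (\<forall>c. \<forall>f\<in>M. restrict (\<lambda>v. c * f v) (vcarrier V) \<in> M)"

definition cone_diff :: "('v, 'm) tvs_scheme \<Rightarrow> ('v \<Rightarrow> real) set \<Rightarrow> ('v \<Rightarrow> real) \<Rightarrow> ('v \<Rightarrow> real) set" where
  "cone_diff V B b = {restrict (\<lambda>v. t * (f v - b v)) (vcarrier V) | t f. 0 \<le> t \<and> f \<in> B}"

definition qri :: "('v, 'm) tvs_scheme \<Rightarrow> ('v \<Rightarrow> real) set \<Rightarrow> ('v \<Rightarrow> real) set" where
  "qri V B = {b \<in> B. dual_subspace V (wstar V closure_of cone_diff V B b)}"

definition qi :: "('v, 'm) tvs_scheme \<Rightarrow> ('v \<Rightarrow> real) set \<Rightarrow> ('v \<Rightarrow> real) set" where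
  "qi V B = {b \<in> B. wstar V closure_of cone_diff V B b = vdual V}"

definition subdiff0 :: "('v, 'm) tvs_scheme \<Rightarrow> ('v \<Rightarrow> ereal) \<Rightarrow> ('v \<Rightarrow> real) set" where
  "subdiff0 V k = {f \<in> vdual V. \<forall>v\<in>vcarrier V. ereal (f v) \<le> k v}"

text \<open>L_k, defined via some (any) element of \<partial>k(0).\<close>
definition Lsp :: "('v, 'm) tvs_scheme \<Rightarrow> ('v \<Rightarrow> ereal) \<Rightarrow> 'v set" where
  "Lsp V k = (let u = (SOME u. u \<in> subdiff0 V k) in
     {v \<in> vcarrier V. k v = ereal (u v) \<and> k (vneg V v) = ereal (- u v)})"

definition coset :: "'a::real_vector set \<Rightarrow> 'a \<Rightarrow> 'a set" where
  "coset L x = (\<lambda>l. x + l) ` L"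

definition quot_top :: "'a::real_vector topology \<Rightarrow> 'a set \<Rightarrow> 'a set topology" where
  "quot_top T L = topology (\<lambda>U. U \<subseteq> range (coset L) \<and>
                                 openin T {x \<in> topspace T. coset L x \<in> U})"

definition Xquot :: "'a::real_vector topology \<Rightarrow> 'a set \<Rightarrow> 'a set tvs" where
  "Xquot T L = \<lparr>vcarrier = range (coset L),
                vadd = (\<lambda>A B. {a + b | a b. a \<in> A \<and> b \<in> B}),
                vscale = (\<lambda>c A. {c *\<^sub>R a + l | a l. a \<in> A \<and> l \<in> L}),
                vzero = L,
                vtop = quot_top T L\<rparr>"

definition ghat :: "('a \<Rightarrow> ereal) \<Rightarrow> ('a \<Rightarrow> real) \<Rightarrow> 'a set \<Rightarrow> ereal" where
  "ghat g xs A = (let x = (SOME x. x \<in> A) in g x - ereal (xs x))"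

end

theory Submission
  imports Defs
begin

text \<open>
  Put \<open>k = g - x*\<close>. It is a nonnegative lower semicontinuous sublinear function,
  \<open>L = {x. k x = 0 \<and> k (-x) = 0}\<close> is a linear subspace along which \<open>k\<close> is invariant,
  and \<open>ghat (x + L) = k x\<close>; this gives everything except the last equivalence.

  For that one, composition with the quotient map is a weak* homeomorphism from
  \<open>(X/L)*\<close> onto the annihilator \<open>L\<^sup>\<bottom>\<close>, mapping \<open>\<partial>ghat(0)\<close> onto \<open>\<partial>g(0) - x*\<close>.
  Hence \<open>0 \<in> qi \<partial>ghat(0)\<close> iff the weak* closure \<open>K\<close> of \<open>\<real>\<^sub>+(\<partial>g(0) - x*)\<close> equals
  \<open>L\<^sup>\<bottom>\<close>. If \<open>K\<close> is a subspace, it is the annihilator of the points on which it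
  vanishes, and these are exactly the points of \<open>L\<close>: if, say, \<open>k x > 0\<close>, then
  Hahn--Banach applied to the infimal convolution of \<open>k\<close> with a multiple of the
  gauge of a convex neighbourhood of \<open>0\<close> gives a continuous linear \<open>F \<le> k\<close> with
  \<open>F x > 0\<close>, that is, a subgradient \<open>x* + F\<close> that differs from \<open>x*\<close> at \<open>x\<close>.
\<close>

section \<open>Hahn--Banach for sublinear functionals\<close>

definition dominated_linear_graph :: "('a::real_vector \<Rightarrow> real) \<Rightarrow> ('a \<times> real) set \<Rightarrow> bool" where
  "dominated_linear_graph p G \<longleftrightarrow>
     single_valued G \<and> (0, 0) \<in> G \<and>
     (\<forall>x a y b. (x, a) \<in> G \<longrightarrow> (y, b) \<in> G \<longrightarrow> (x + y, a + b) \<in> G) \<and>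
     (\<forall>x a s. (x, a) \<in> G \<longrightarrow> (s *\<^sub>R x, s * a) \<in> G) \<and>
     (\<forall>x a. (x, a) \<in> G \<longrightarrow> a \<le> p x)"

lemma dominated_linear_graphI:
  assumes "single_valued G" "(0, 0) \<in> G"
    and "\<And>x a y b. (x, a) \<in> G \<Longrightarrow> (y, b) \<in> G \<Longrightarrow> (x + y, a + b) \<in> G"
    and "\<And>x a s. (x, a) \<in> G \<Longrightarrow> (s *\<^sub>R x, s * a) \<in> G"
    and "\<And>x a. (x, a) \<in> G \<Longrightarrow> a \<le> p x"
  shows "dominated_linear_graph p G"
  using assms unfolding dominated_linear_graph_def by blast

lemma dominated_linear_graphD:
  assumes "dominated_linear_graph p G"
  shows "single_valued G" "(0, 0) \<in> G"
    and "\<And>x a y b. (x, a) \<in> G \<Longrightarrow> (y, b) \<in> G \<Longrightarrow> (x + y, a + b) \<in> G"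
    and "\<And>x a s. (x, a) \<in> G \<Longrightarrow> (s *\<^sub>R x, s * a) \<in> G"
    and "\<And>x a. (x, a) \<in> G \<Longrightarrow> a \<le> p x"
  using assms unfolding dominated_linear_graph_def by blast+

definition graph_adjoin :: "('a::real_vector \<times> real) set \<Rightarrow> 'a \<Rightarrow> real \<Rightarrow> ('a \<times> real) set" where
  "graph_adjoin G x c = {(m + s *\<^sub>R x, a + s * c) | m a s. (m, a) \<in> G}"

context
  fixes p :: "'a::real_vector \<Rightarrow> real"
  assumes p_add: "\<And>x y. p (x + y) \<le> p x + p y"
    and p_scaleR: "\<And>s x. 0 < s \<Longrightarrow> p (s *\<^sub>R x) = s * p x"
begin

lemma dominated_linear_graph_extension_value:
  assumes G: "dominated_linear_graph p G"
  obtains c where "\<And>m a. (m, a) \<in> G \<Longrightarrow> a - p (m - x) \<le> c"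
    and "\<And>m a. (m, a) \<in> G \<Longrightarrow> c \<le> p (m + x) - a"
proof -
  have bound: "a - p (m - x) \<le> p (m' + x) - a'" if "(m, a) \<in> G" "(m', a') \<in> G" for m a m' a'
  proof -
    have "a + a' \<le> p ((m - x) + (m' + x))"
      using dominated_linear_graphD(5)[OF G dominated_linear_graphD(3)[OF G that]] by simp
    then show ?thesis using p_add[of "m - x" "m' + x"] by linarith
  qed
  define S where "S = {a - p (m - x) | m a. (m, a) \<in> G}"
  have "S \<noteq> {}" using dominated_linear_graphD(2)[OF G] unfolding S_def by blast
  moreover have "bdd_above S"
    using bound[OF _ dominated_linear_graphD(2)[OF G]] unfolding S_def bdd_above_def by auto
  ultimately show ?thesis
    using bound by (intro that[of "Sup S"] cSup_upper cSup_least) (auto simp: S_def)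
qed

lemma single_valued_graph_adjoin:
  assumes G: "dominated_linear_graph p G" and x: "x \<notin> Domain G"
  shows "single_valued (graph_adjoin G x c)"
proof (rule single_valuedI)
  note add = dominated_linear_graphD(3)[OF G] and scale = dominated_linear_graphD(4)[OF G]
  have unique: "s = s' \<and> m = m'"
    if "(m, a) \<in> G" "(m', a') \<in> G" "m + s *\<^sub>R x = m' + s' *\<^sub>R x" for m a m' a' s s'
  proof (rule ccontr)
    assume "\<not> (s = s' \<and> m = m')"
    then have "s \<noteq> s'" using that(3) by auto
    have "((1 / (s' - s)) *\<^sub>R (m + (- 1) *\<^sub>R m'), (1 / (s' - s)) * (a + (- 1) * a')) \<in> G"
      using scale[OF add[OF that(1) scale[OF that(2)]]] .
    moreover have "m + (- 1) *\<^sub>R m' = (s' - s) *\<^sub>R x"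
      using that(3) by (simp add: algebra_simps)
    then have "(1 / (s' - s)) *\<^sub>R (m + (- 1) *\<^sub>R m') = x"
      using \<open>s \<noteq> s'\<close> by simp
    ultimately show False using x by (metis DomainI)
  qed
  fix y b b' assume "(y, b) \<in> graph_adjoin G x c" "(y, b') \<in> graph_adjoin G x c"
  then obtain m a s m' a' s' where "(m, a) \<in> G" "(m', a') \<in> G"
    "y = m + s *\<^sub>R x" "b = a + s * c" "y = m' + s' *\<^sub>R x" "b' = a' + s' * c"
    unfolding graph_adjoin_def by blast
  then show "b = b'" using unique single_valuedD[OF dominated_linear_graphD(1)[OF G]] by metis
qed

lemma graph_adjoin_le:
  assumes G: "dominated_linear_graph p G" and ma: "(m, a) \<in> G"
    and below: "\<And>m a. (m, a) \<in> G \<Longrightarrow> a - p (m - x) \<le> c"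
    and above: "\<And>m a. (m, a) \<in> G \<Longrightarrow> c \<le> p (m + x) - a"
  shows "a + s * c \<le> p (m + s *\<^sub>R x)"
proof -
  consider "s = 0" | "0 < s" | "s < 0" by linarith
  then show ?thesis
  proof cases
    case 1
    then show ?thesis using dominated_linear_graphD(5)[OF G ma] by simp
  next
    case 2
    have "c \<le> p ((1 / s) *\<^sub>R m + x) - (1 / s) * a"
      using above[OF dominated_linear_graphD(4)[OF G ma]] .
    then have "s * c \<le> s * p ((1 / s) *\<^sub>R m + x) - a"
      using 2 by (simp add: field_simps)
    also have "s * p ((1 / s) *\<^sub>R m + x) = p (m + s *\<^sub>R x)"
      using p_scaleR[OF 2, of "(1 / s) *\<^sub>R m + x"] 2 by (simp add: algebra_simps)
    finally show ?thesis by linarith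
  next
    case 3
    have "(- 1 / s) * a - p ((- 1 / s) *\<^sub>R m - x) \<le> c"
      using below[OF dominated_linear_graphD(4)[OF G ma]] .
    then have "a - (- s) * p ((- 1 / s) *\<^sub>R m - x) \<le> (- s) * c"
      using 3 by (simp add: field_simps)
    also have "(- s) * p ((- 1 / s) *\<^sub>R m - x) = p (m + s *\<^sub>R x)"
      using p_scaleR[of "- s" "(- 1 / s) *\<^sub>R m - x"] 3 by (simp add: algebra_simps)
    finally show ?thesis by linarith
  qed
qed

lemma dominated_linear_graph_adjoin:
  assumes G: "dominated_linear_graph p G" and x: "x \<notin> Domain G"
    and below: "\<And>m a. (m, a) \<in> G \<Longrightarrow> a - p (m - x) \<le> c"
    and above: "\<And>m a. (m, a) \<in> G \<Longrightarrow> c \<le> p (m + x) - a"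
  shows "dominated_linear_graph p (graph_adjoin G x c)"
proof (rule dominated_linear_graphI)
  note add = dominated_linear_graphD(3)[OF G] and scale = dominated_linear_graphD(4)[OF G]
  show "single_valued (graph_adjoin G x c)" using single_valued_graph_adjoin[OF G x] .
  have "(0 + 0 *\<^sub>R x, 0 + 0 * c) \<in> graph_adjoin G x c"
    unfolding graph_adjoin_def using dominated_linear_graphD(2)[OF G] by blast
  then show "(0, 0) \<in> graph_adjoin G x c" by simp
  show "(y + y', b + b') \<in> graph_adjoin G x c"
    if yb: "(y, b) \<in> graph_adjoin G x c" "(y', b') \<in> graph_adjoin G x c" for y b y' b'
  proof -
    obtain m a s m' a' s' where "(m, a) \<in> G" "(m', a') \<in> G"
      "y = m + s *\<^sub>R x" "b = a + s * c" "y' = m' + s' *\<^sub>R x" "b' = a' + s' * c"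
      using yb unfolding graph_adjoin_def by blast
    then have "(m + m', a + a') \<in> G" "y + y' = (m + m') + (s + s') *\<^sub>R x"
      "b + b' = (a + a') + (s + s') * c"
      by (simp_all add: add algebra_simps)
    then show ?thesis unfolding graph_adjoin_def by blast
  qed
  show "(t *\<^sub>R y, t * b) \<in> graph_adjoin G x c" if yb: "(y, b) \<in> graph_adjoin G x c" for y b t
  proof -
    obtain m a s where ma: "(m, a) \<in> G" and "y = m + s *\<^sub>R x" "b = a + s * c"
      using yb unfolding graph_adjoin_def by blast
    then have "t *\<^sub>R y = t *\<^sub>R m + (t * s) *\<^sub>R x" "t * b = t * a + (t * s) * c"
      by (simp_all add: algebra_simps)
    then show ?thesis using scale[OF ma, of t] unfolding graph_adjoin_def by blast
  qed
  show "b \<le> p y" if "(y, b) \<in> graph_adjoin G x c" for y b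
    using that graph_adjoin_le[OF G _ below above] unfolding graph_adjoin_def by blast
qed

lemma dominated_linear_graph_extend:
  assumes G: "dominated_linear_graph p G" and x: "x \<notin> Domain G"
  obtains G' where "dominated_linear_graph p G'" "G \<subset> G'"
proof -
  obtain c where below: "\<And>m a. (m, a) \<in> G \<Longrightarrow> a - p (m - x) \<le> c"
    and above: "\<And>m a. (m, a) \<in> G \<Longrightarrow> c \<le> p (m + x) - a"
    using dominated_linear_graph_extension_value[OF G] by blast
  have "G \<subseteq> graph_adjoin G x c"
  proof
    fix u assume "u \<in> G"
    moreover obtain m a where "u = (m, a)" by fastforce
    ultimately have "(m + 0 *\<^sub>R x, a + 0 * c) \<in> graph_adjoin G x c" unfolding graph_adjoin_def by blast
    then show "u \<in> graph_adjoin G x c" using \<open>u = (m, a)\<close> by simp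
  qed
  moreover have "(0 + 1 *\<^sub>R x, 0 + 1 * c) \<in> graph_adjoin G x c"
    unfolding graph_adjoin_def using dominated_linear_graphD(2)[OF G] by blast
  then have "(x, c) \<in> graph_adjoin G x c - G" using x by auto
  ultimately show ?thesis using that dominated_linear_graph_adjoin[OF G x below above] by blast
qed

lemma dominated_linear_graph_Union_chain:
  assumes "C \<noteq> {}" and "\<And>G. G \<in> C \<Longrightarrow> dominated_linear_graph p G"
    and chain: "\<And>G H. G \<in> C \<Longrightarrow> H \<in> C \<Longrightarrow> G \<subseteq> H \<or> H \<subseteq> G"
  shows "dominated_linear_graph p (\<Union>C)"
proof -
  have common: "\<exists>G\<in>C. u \<in> G \<and> v \<in> G" if uv: "u \<in> \<Union>C" "v \<in> \<Union>C" for u v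
  proof -
    obtain G H where "G \<in> C" "H \<in> C" "u \<in> G" "v \<in> H" using uv by blast
    then show ?thesis using chain[of G H] by blast
  qed
  show ?thesis
  proof (rule dominated_linear_graphI)
    show "single_valued (\<Union>C)"
    proof (rule single_valuedI)
      fix x a b assume "(x, a) \<in> \<Union>C" "(x, b) \<in> \<Union>C"
      then obtain G where "G \<in> C" "(x, a) \<in> G" "(x, b) \<in> G" using common by blast
      then show "a = b" using assms(2) dominated_linear_graphD(1) single_valuedD by metis
    qed
    show "(0, 0) \<in> \<Union>C" using assms(1,2) dominated_linear_graphD(2) by blast
    show "(x + y, a + b) \<in> \<Union>C" if xy: "(x, a) \<in> \<Union>C" "(y, b) \<in> \<Union>C" for x a y b
    proof -
      obtain G where "G \<in> C" "(x, a) \<in> G" "(y, b) \<in> G" using common[OF xy] by blast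
      then show ?thesis using assms(2) dominated_linear_graphD(3) by blast
    qed
    show "(s *\<^sub>R x, s * a) \<in> \<Union>C" if "(x, a) \<in> \<Union>C" for x a s
      using that assms(2) dominated_linear_graphD(4) by blast
    show "a \<le> p x" if "(x, a) \<in> \<Union>C" for x a
      using that assms(2) dominated_linear_graphD(5) by blast
  qed
qed

lemma maximal_dominated_linear_graph:
  assumes G0: "dominated_linear_graph p G0"
  obtains M where "dominated_linear_graph p M" "G0 \<subseteq> M" "Domain M = UNIV"
proof -
  define \<G> where "\<G> = {G. dominated_linear_graph p G \<and> G0 \<subseteq> G}"
  have "\<exists>M\<in>\<G>. \<forall>G\<in>\<G>. M \<subseteq> G \<longrightarrow> G = M"
  proof (rule subset_Zorn_nonempty)
    show "\<G> \<noteq> {}" using G0 unfolding \<G>_def by blast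
  next
    fix C assume C: "C \<noteq> {}" "subset.chain \<G> C"
    then have C\<G>: "C \<subseteq> \<G>" and chain: "\<And>G H. G \<in> C \<Longrightarrow> H \<in> C \<Longrightarrow> G \<subseteq> H \<or> H \<subseteq> G"
      unfolding subset.chain_def by auto
    have "dominated_linear_graph p (\<Union>C)"
      using C(1) chain C\<G> unfolding \<G>_def by (intro dominated_linear_graph_Union_chain) auto
    moreover have "G0 \<subseteq> \<Union>C" using C(1) C\<G> unfolding \<G>_def by auto
    ultimately show "\<Union>C \<in> \<G>" unfolding \<G>_def by simp
  qed
  then obtain M where "M \<in> \<G>" and maximal: "\<And>G. G \<in> \<G> \<Longrightarrow> M \<subseteq> G \<Longrightarrow> G = M"
    by blast
  then have M: "dominated_linear_graph p M" "G0 \<subseteq> M" unfolding \<G>_def by auto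
  have "x \<in> Domain M" for x
  proof (rule ccontr)
    assume "x \<notin> Domain M"
    then obtain G where "dominated_linear_graph p G" "M \<subset> G"
      using dominated_linear_graph_extend[OF M(1)] by blast
    moreover from this have "G \<in> \<G>" using M(2) unfolding \<G>_def by auto
    ultimately show False using maximal by blast
  qed
  then show ?thesis using that M by blast
qed

theorem hahn_banach:
  assumes G0: "dominated_linear_graph p G0"
  obtains F where "linear F" "\<And>x. F x \<le> p x" "\<And>x a. (x, a) \<in> G0 \<Longrightarrow> F x = a"
proof -
  obtain M where M: "dominated_linear_graph p M" "G0 \<subseteq> M" "Domain M = UNIV"
    using maximal_dominated_linear_graph[OF G0] by blast
  define F where "F x = (THE a. (x, a) \<in> M)" for x
  have graph: "(x, a) \<in> M \<longleftrightarrow> F x = a" for x a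
  proof -
    note sv = dominated_linear_graphD(1)[OF M(1)]
    obtain b where b: "(x, b) \<in> M" using M(3) by blast
    have "F x = b"
      unfolding F_def by (rule the_equality) (use b sv in \<open>auto dest: single_valuedD\<close>)
    then show ?thesis using b sv by (auto dest: single_valuedD)
  qed
  note add = dominated_linear_graphD(3)[OF M(1)] and scale = dominated_linear_graphD(4)[OF M(1)]
  have "linear F"
  proof (rule linearI)
    show "F (x + y) = F x + F y" for x y
      using add[of x "F x" y "F y"] graph by blast
    show "F (r *\<^sub>R x) = r *\<^sub>R F x" for r x
      using scale[of x "F x" r] graph by simp
  qed
  moreover have "F x \<le> p x" for x using dominated_linear_graphD(5)[OF M(1)] graph by blast
  ultimately show ?thesis using that graph M(2) by blast
qed

lemma dominated_linear_graph_line: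
  "dominated_linear_graph p {(s *\<^sub>R y, s * p y) | s. True}" (is "dominated_linear_graph p ?G")
proof (rule dominated_linear_graphI)
  have p0: "p 0 = 0" using p_scaleR[of 2 0] by simp
  show "single_valued ?G"
  proof (rule single_valuedI)
    fix x a b assume "(x, a) \<in> ?G" "(x, b) \<in> ?G"
    then obtain s t where "x = s *\<^sub>R y" "a = s * p y" "x = t *\<^sub>R y" "b = t * p y" by blast
    then show "a = b" by (cases "y = 0") (auto simp: p0 scaleR_cancel_right)
  qed
  have "(0 *\<^sub>R y, 0 * p y) \<in> ?G" by blast
  then show "(0, 0) \<in> ?G" by simp
  show "(x + x', a + a') \<in> ?G" if xa: "(x, a) \<in> ?G" "(x', a') \<in> ?G" for x a x' a'
  proof -
    obtain s t where "x = s *\<^sub>R y" "a = s * p y" "x' = t *\<^sub>R y" "a' = t * p y" using xa by blast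
    then have "x + x' = (s + t) *\<^sub>R y" "a + a' = (s + t) * p y" by (simp_all add: algebra_simps)
    then show ?thesis by blast
  qed
  show "(r *\<^sub>R x, r * a) \<in> ?G" if xa: "(x, a) \<in> ?G" for x a r
  proof -
    obtain s where "x = s *\<^sub>R y" "a = s * p y" using xa by blast
    then have "r *\<^sub>R x = (r * s) *\<^sub>R y" "r * a = (r * s) * p y" by simp_all
    then show ?thesis by blast
  qed
  have "s * p y \<le> p (s *\<^sub>R y)" for s
  proof -
    consider "0 < s" | "s = 0" | "s < 0" by linarith
    then show ?thesis
    proof cases
      case 3
      have "0 \<le> p y + p (- y)" using p_add[of y "- y"] p0 by simp
      then have "s * (p y + p (- y)) \<le> 0" using 3 by (simp add: mult_nonpos_nonneg)
      then have "s * p y \<le> (- s) * p (- y)" by (simp add: algebra_simps)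
      also have "\<dots> = p (s *\<^sub>R y)" using p_scaleR[of "- s" "- y"] 3 by simp
      finally show ?thesis .
    qed (simp_all add: p_scaleR p0)
  qed
  then show "a \<le> p x" if "(x, a) \<in> ?G" for x a using that by blast
qed

corollary sublinear_linear_minorant_attains:
  obtains F where "linear F" "\<And>x. F x \<le> p x" "F y = p y"
proof -
  obtain F where F: "linear F" "\<And>x. F x \<le> p x"
    and line: "\<And>x a. (x, a) \<in> {(s *\<^sub>R y, s * p y) | s. True} \<Longrightarrow> F x = a"
    using hahn_banach[OF dominated_linear_graph_line[of y]] by blast
  have "(y, p y) \<in> {(s *\<^sub>R y, s * p y) | s. True}"
    unfolding mem_Collect_eq by (rule exI[of _ 1]) simp
  then show ?thesis using that F line by blast
qed

end

section \<open>Continuous linear minorants of lower semicontinuous sublinear functions\<close>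

lemma vconvex_Xs_iff: "vconvex (Xs T) W \<longleftrightarrow> convex W"
proof
  assume convex: "vconvex (Xs T) W"
  show "convex W"
    unfolding convex_alt
  proof (intro ballI allI impI)
    fix x y and u :: real assume "x \<in> W" "y \<in> W" "0 \<le> u \<and> u \<le> 1"
    then have "u *\<^sub>R y + (1 - u) *\<^sub>R x \<in> W" using convex unfolding vconvex_def Xs_def by simp
    then show "(1 - u) *\<^sub>R x + u *\<^sub>R y \<in> W" by (simp add: add.commute)
  qed
next
  assume "convex W"
  then show "vconvex (Xs T) W"
    unfolding convex_def vconvex_def Xs_def by auto
qed

context
  fixes T :: "'a::real_vector topology"
  assumes X: "is_hlcs (Xs T)"
begin

lemma hlcs_topspace: "topspace T = UNIV"
  using X unfolding is_hlcs_def Xs_def by simp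

lemma hlcs_continuous_map_add: "continuous_map (prod_topology T T) T (\<lambda>(u, v). u + v)"
  using X unfolding is_hlcs_def Xs_def by simp

lemma hlcs_continuous_map_scaleR:
  "continuous_map (prod_topology euclideanreal T) T (\<lambda>(c, v). c *\<^sub>R v)"
  using X unfolding is_hlcs_def Xs_def by simp

lemma hlcs_convex_nhd:
  assumes "openin T U" "0 \<in> U"
  obtains W where "openin T W" "0 \<in> W" "W \<subseteq> U" "convex W"
  using X assms unfolding is_hlcs_def by (auto simp: Xs_def vconvex_Xs_iff[of T, symmetric])

lemma hlcs_continuous_map_affine: "continuous_map T T (\<lambda>x. s *\<^sub>R x + a)"
proof -
  have scale: "continuous_map T T (\<lambda>x. s *\<^sub>R x)"
  proof -
    have "continuous_map T (prod_topology euclideanreal T) (\<lambda>x. (s, x))"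
      by (intro continuous_map_pairedI) auto
    from continuous_map_compose[OF this hlcs_continuous_map_scaleR] show ?thesis
      by (simp add: o_def)
  qed
  have "continuous_map T (prod_topology T T) (\<lambda>x. (s *\<^sub>R x, a))"
    using scale by (intro continuous_map_pairedI) (auto simp: hlcs_topspace)
  from continuous_map_compose[OF this hlcs_continuous_map_add] show ?thesis
    by (simp add: o_def)
qed

lemma hlcs_openin_affine_preimage: "openin T U \<Longrightarrow> openin T {x. s *\<^sub>R x + a \<in> U}"
  using openin_continuous_map_preimage[OF hlcs_continuous_map_affine] by (simp add: hlcs_topspace)

lemma hlcs_absorbing:
  assumes "openin T W" "0 \<in> W"
  obtains t w where "0 < t" "w \<in> W" "x = t *\<^sub>R w"
proof -
  have "continuous_map euclideanreal T (\<lambda>s. s *\<^sub>R x)"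
  proof -
    have "continuous_map euclideanreal (prod_topology euclideanreal T) (\<lambda>s. (s, x))"
      by (intro continuous_map_pairedI) (auto simp: hlcs_topspace)
    from continuous_map_compose[OF this hlcs_continuous_map_scaleR] show ?thesis
      by (simp add: o_def)
  qed
  then have "open {s::real. s *\<^sub>R x \<in> W}"
    using openin_continuous_map_preimage[of euclideanreal T _ W] assms(1) by simp
  moreover have "0 \<in> {s::real. s *\<^sub>R x \<in> W}" using assms(2) by simp
  ultimately obtain e where e: "0 < e" "ball 0 e \<subseteq> {s::real. s *\<^sub>R x \<in> W}"
    by (meson open_contains_ball)
  moreover have "e / 2 \<in> ball 0 e" using e(1) by simp
  ultimately have "(e / 2) *\<^sub>R x \<in> W" by blast
  moreover have "x = (2 / e) *\<^sub>R ((e / 2) *\<^sub>R x)" using e by simp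
  ultimately show ?thesis using e(1) by (intro that[of "2 / e" "(e / 2) *\<^sub>R x"]) auto
qed

lemma hlcs_symmetric_convex_nhd:
  assumes "openin T U" "0 \<in> U"
  obtains W where "openin T W" "0 \<in> W" "W \<subseteq> U" "convex W" "\<And>w. w \<in> W \<Longrightarrow> - w \<in> W"
proof -
  obtain W0 where W0: "openin T W0" "0 \<in> W0" "W0 \<subseteq> U" "convex W0"
    using hlcs_convex_nhd[OF assms] .
  have "openin T {x. (- 1) *\<^sub>R x + 0 \<in> W0}" using hlcs_openin_affine_preimage[OF W0(1)] .
  then have "openin T (W0 \<inter> uminus -` W0)" using W0(1) by (intro openin_Int) (auto simp: vimage_def)
  moreover have "convex (W0 \<inter> uminus -` W0)"
    using W0(4) by (intro convex_Int convex_linear_vimage linear_uminus)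
  ultimately show ?thesis
    using W0(2,3) by (intro that[of "W0 \<inter> uminus -` W0"]) auto
qed

lemma linear_continuous_if_bounded_on_nhd:
  assumes F: "linear F" and W: "openin T W" "0 \<in> W" and bounded: "\<And>w. w \<in> W \<Longrightarrow> \<bar>F w\<bar> \<le> c"
  shows "continuous_map T euclideanreal F"
  unfolding continuous_map_def
proof (intro conjI allI impI)
  show "F \<in> topspace T \<rightarrow> topspace euclideanreal" by simp
  fix U :: "real set" assume "openin euclideanreal U"
  show "openin T {x \<in> topspace T. F x \<in> U}"
  proof (subst openin_subopen, intro ballI)
    fix x0 assume x0: "x0 \<in> {x \<in> topspace T. F x \<in> U}"
    have "open U" using \<open>openin euclideanreal U\<close> by simp
    then obtain e where e: "0 < e" "ball (F x0) e \<subseteq> U"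
      using open_contains_ball_eq[of U "F x0"] x0 by auto
    define d where "d = \<bar>c\<bar> + 1"
    have d: "0 < d" "c < d" unfolding d_def by auto
    define N where "N = {x. (d / e) *\<^sub>R x + (- (d / e) *\<^sub>R x0) \<in> W}"
    have "openin T N" unfolding N_def using hlcs_openin_affine_preimage[OF W(1)] .
    moreover have "x0 \<in> N" unfolding N_def using W(2) by simp
    moreover have "F x \<in> U" if "x \<in> N" for x
    proof -
      have "(d / e) *\<^sub>R (x - x0) \<in> W" using that unfolding N_def by (simp add: algebra_simps)
      then have "\<bar>F ((d / e) *\<^sub>R (x - x0))\<bar> \<le> c" by (rule bounded)
      moreover have "F ((d / e) *\<^sub>R (x - x0)) = (d / e) * (F x - F x0)"
        using linear_diff[OF F] linear_scale[OF F] by simp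
      ultimately have "(d / e) * \<bar>F x - F x0\<bar> \<le> c" using d(1) e(1) by (simp add: abs_mult)
      then have "d * \<bar>F x - F x0\<bar> \<le> c * e" using e(1) by (simp add: field_simps)
      also have "\<dots> < d * e" using d(2) e(1) by simp
      finally have "\<bar>F x - F x0\<bar> < e" using d(1) by simp
      then show ?thesis using e(2) by (auto simp: dist_real_def abs_minus_commute)
    qed
    ultimately show "\<exists>N. openin T N \<and> x0 \<in> N \<and> N \<subseteq> {x \<in> topspace T. F x \<in> U}"
      by (auto simp: hlcs_topspace)
  qed
qed

end

locale gauge_convolution =
  fixes k :: "'a::real_vector \<Rightarrow> ereal" and c :: real and W :: "'a set"
  assumes k_nonneg: "\<And>x. 0 \<le> k x" and k_zero: "k 0 = 0"
    and k_add: "\<And>x y. k (x + y) \<le> k x + k y"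
    and k_scaleR: "\<And>t x. 0 < t \<Longrightarrow> k (t *\<^sub>R x) = ereal t * k x"
    and c_pos: "0 < c"
    and W_convex: "convex W" and W_zero: "0 \<in> W"
    and W_absorbing: "\<And>x. \<exists>t>0. \<exists>w\<in>W. x = t *\<^sub>R w"
begin

text \<open>\<open>infconv x = inf {k z + c t | x = z + t w, t \<ge> 0, w \<in> W}\<close> is the infimal convolution
  of \<open>k\<close> with \<open>c\<close> times the gauge of \<open>W\<close>.\<close>

definition majorants :: "'a \<Rightarrow> real set" where
  "majorants x = {r. \<exists>z t w. 0 \<le> t \<and> w \<in> W \<and> x = z + t *\<^sub>R w \<and> k z \<le> ereal (r - c * t)}"

definition infconv :: "'a \<Rightarrow> real" where
  "infconv x = Inf (majorants x)"

lemma majorantsI: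
  "0 \<le> t \<Longrightarrow> w \<in> W \<Longrightarrow> x = z + t *\<^sub>R w \<Longrightarrow> k z \<le> ereal (r - c * t) \<Longrightarrow> r \<in> majorants x"
  unfolding majorants_def by blast

lemma majorantsE:
  assumes "r \<in> majorants x"
  obtains z t w where "0 \<le> t" "w \<in> W" "x = z + t *\<^sub>R w" "k z \<le> ereal (r - c * t)"
  using assms unfolding majorants_def by blast

lemma majorants_nonneg:
  assumes "r \<in> majorants x" shows "0 \<le> r"
proof -
  obtain z t w where t: "0 \<le> t" and z: "k z \<le> ereal (r - c * t)"
    using majorantsE[OF assms] by metis
  have "0 \<le> ereal (r - c * t)" using k_nonneg[of z] z by (rule order_trans)
  moreover have "0 \<le> c * t" using t c_pos by simp
  ultimately show ?thesis by simp
qed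

lemma bdd_below_majorants: "bdd_below (majorants x)"
  unfolding bdd_below_def using majorants_nonneg by blast

lemma majorants_nonempty: "majorants x \<noteq> {}"
proof -
  obtain t w where "0 < t" "w \<in> W" "x = t *\<^sub>R w" using W_absorbing by blast
  then have "c * t \<in> majorants x" by (intro majorantsI[of t w x 0]) (auto simp: k_zero)
  then show ?thesis by blast
qed

lemma infconv_le: "r \<in> majorants x \<Longrightarrow> infconv x \<le> r"
  unfolding infconv_def by (rule cInf_lower[OF _ bdd_below_majorants])

lemma infconv_ge: "(\<And>r. r \<in> majorants x \<Longrightarrow> b \<le> r) \<Longrightarrow> b \<le> infconv x"
  unfolding infconv_def using majorants_nonempty by (rule cInf_greatest)

lemma infconv_le_k: "ereal (infconv x) \<le> k x"
proof (cases "k x")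
  case (real a)
  then have "a \<in> majorants x" by (intro majorantsI[of 0 0 x x]) (auto simp: W_zero)
  then show ?thesis using infconv_le real by simp
qed (use k_nonneg[of x] in auto)

lemma infconv_le_on_W: "w \<in> W \<Longrightarrow> infconv w \<le> c"
  by (rule infconv_le, rule majorantsI[of 1 w w 0]) (auto simp: k_zero)

lemma W_cone_add:
  assumes "0 \<le> t1" "0 \<le> t2" "w1 \<in> W" "w2 \<in> W"
  obtains w where "w \<in> W" "t1 *\<^sub>R w1 + t2 *\<^sub>R w2 = (t1 + t2) *\<^sub>R w"
proof (cases "t1 + t2 = 0")
  case True
  then have "t1 = 0" "t2 = 0" using assms(1,2) by auto
  then show ?thesis using that[of 0] W_zero by simp
next
  case False
  then have pos: "0 < t1 + t2" using assms by simp
  define w where "w = (t1 / (t1 + t2)) *\<^sub>R w1 + (t2 / (t1 + t2)) *\<^sub>R w2"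
  have "w \<in> W"
    unfolding w_def using W_convex assms pos
    by (intro convexD) (auto simp: add_divide_distrib[symmetric])
  moreover have "t1 *\<^sub>R w1 + t2 *\<^sub>R w2 = (t1 + t2) *\<^sub>R w"
    unfolding w_def using pos by (simp add: scaleR_add_right)
  ultimately show ?thesis using that by blast
qed

lemma infconv_add: "infconv (x + y) \<le> infconv x + infconv y"
proof -
  have sum: "r + s \<in> majorants (x + y)" if r: "r \<in> majorants x" and s: "s \<in> majorants y" for r s
  proof -
    obtain z t w where 1: "0 \<le> t" "w \<in> W" "x = z + t *\<^sub>R w" "k z \<le> ereal (r - c * t)"
      using majorantsE[OF r] .
    obtain z' t' w' where 2: "0 \<le> t'" "w' \<in> W" "y = z' + t' *\<^sub>R w'" "k z' \<le> ereal (s - c * t')"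
      using majorantsE[OF s] .
    obtain v where v: "v \<in> W" "t *\<^sub>R w + t' *\<^sub>R w' = (t + t') *\<^sub>R v"
      using W_cone_add[OF 1(1) 2(1) 1(2) 2(2)] .
    have "k (z + z') \<le> ereal (r - c * t) + ereal (s - c * t')"
      using k_add[of z z'] add_mono[OF 1(4) 2(4)] by (rule order_trans)
    then show ?thesis
      using 1 2 v by (intro majorantsI[of "t + t'" v _ "z + z'"]) (auto simp: algebra_simps)
  qed
  have "infconv (x + y) - infconv y \<le> r" if r: "r \<in> majorants x" for r
  proof -
    have "infconv (x + y) - r \<le> s" if "s \<in> majorants y" for s
      using infconv_le[OF sum[OF r that]] by linarith
    then have "infconv (x + y) - r \<le> infconv y" by (rule infconv_ge)
    then show ?thesis by linarith
  qed
  then have "infconv (x + y) - infconv y \<le> infconv x" by (rule infconv_ge)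
  then show ?thesis by linarith
qed

lemma infconv_scaleR_le:
  assumes s: "0 < s" shows "infconv (s *\<^sub>R x) \<le> s * infconv x"
proof -
  have "infconv (s *\<^sub>R x) / s \<le> r" if r: "r \<in> majorants x" for r
  proof -
    obtain z t w where 1: "0 \<le> t" "w \<in> W" "x = z + t *\<^sub>R w" "k z \<le> ereal (r - c * t)"
      using majorantsE[OF r] .
    have "k (s *\<^sub>R z) = ereal s * k z" using k_scaleR[OF s] .
    also have "\<dots> \<le> ereal s * ereal (r - c * t)" using 1(4) s by (intro ereal_mult_left_mono) auto
    finally have "k (s *\<^sub>R z) \<le> ereal (s * r - c * (s * t))" by (simp add: algebra_simps)
    then have "s * r \<in> majorants (s *\<^sub>R x)"
      using 1 s by (intro majorantsI[of "s * t" w _ "s *\<^sub>R z"]) (auto simp: algebra_simps)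
    then show ?thesis using infconv_le s by (simp add: divide_le_eq mult.commute)
  qed
  then have "infconv (s *\<^sub>R x) / s \<le> infconv x" by (rule infconv_ge)
  then show ?thesis using s by (simp add: divide_le_eq mult.commute)
qed

lemma infconv_scaleR: "0 < s \<Longrightarrow> infconv (s *\<^sub>R x) = s * infconv x"
  using infconv_scaleR_le[of s x] infconv_scaleR_le[of "1 / s" "s *\<^sub>R x"]
  by (simp add: field_simps)

lemma infconv_lower_bound:
  assumes y: "\<And>w. w \<in> W \<Longrightarrow> ereal c < k (y - w)"
  shows "c \<le> infconv y"
proof (rule infconv_ge)
  fix r assume "r \<in> majorants y"
  then obtain z t w where 1: "0 \<le> t" "w \<in> W" "y = z + t *\<^sub>R w" "k z \<le> ereal (r - c * t)"
    by (rule majorantsE)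
  show "c \<le> r"
  proof (cases "t \<le> 1")
    case True
    have "t *\<^sub>R w \<in> W"
      using convexD[OF W_convex 1(2) W_zero, of t "1 - t"] 1(1) True by simp
    then have "ereal c < k z" using y[of "t *\<^sub>R w"] 1(3) by simp
    then have "ereal c < ereal (r - c * t)" using 1(4) by (rule less_le_trans)
    moreover have "0 \<le> c * t" using 1(1) c_pos by simp
    ultimately show ?thesis by simp
  next
    case False
    have "c * 1 \<le> c * t" using False c_pos by simp
    moreover have "0 \<le> ereal (r - c * t)" using k_nonneg[of z] 1(4) by (rule order_trans)
    then have "0 \<le> r - c * t" by simp
    ultimately show ?thesis by simp
  qed
qed

end

theorem lsc_sublinear_separation:
  fixes T :: "'a::real_vector topology" and k :: "'a \<Rightarrow> ereal"
  assumes X: "is_hlcs (Xs T)"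
    and k_nonneg: "\<And>x. 0 \<le> k x" and k_zero: "k 0 = 0"
    and k_add: "\<And>x y. k (x + y) \<le> k x + k y"
    and k_scaleR: "\<And>t x. 0 < t \<Longrightarrow> k (t *\<^sub>R x) = ereal t * k x"
    and k_lsc: "\<And>a::real. openin T {x. ereal a < k x}"
    and y: "0 < k y"
  obtains F where "linear F" "continuous_map T euclideanreal F" "\<And>x. ereal (F x) \<le> k x" "0 < F y"
proof -
  obtain c where c: "0 < ereal c" "ereal c < k y" using ereal_dense2[OF y] by blast
  define U where "U = {w. ereal c < k (y - w)}"
  have "openin T U"
    using hlcs_openin_affine_preimage[OF X k_lsc, of "- 1" y c] unfolding U_def by simp
  moreover have "0 \<in> U" unfolding U_def using c(2) by simp
  ultimately obtain W where W: "openin T W" "0 \<in> W" "W \<subseteq> U" "convex W" "\<And>w. w \<in> W \<Longrightarrow> - w \<in> W"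
    by (metis hlcs_symmetric_convex_nhd[OF X])
  have below: "ereal c < k (y - w)" if "w \<in> W" for w
    using W(3) that unfolding U_def by blast
  have absorbing: "\<exists>t>0. \<exists>w\<in>W. x = t *\<^sub>R w" for x
    using hlcs_absorbing[OF X W(1,2), of x] by blast
  interpret gauge_convolution k c W
  proof
    show "0 < c" using c(1) by simp
  qed (fact k_nonneg k_zero k_add k_scaleR W(2,4) absorbing)+
  obtain F where F: "linear F" "\<And>x. F x \<le> infconv x" "F y = infconv y"
    by (metis sublinear_linear_minorant_attains[OF infconv_add infconv_scaleR])
  have "\<bar>F w\<bar> \<le> c" if "w \<in> W" for w
    using F(2)[of w] F(2)[of "- w"] infconv_le_on_W[OF that] infconv_le_on_W[OF W(5)[OF that]]
      linear_neg[OF F(1), of w] by linarith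
  then have "continuous_map T euclideanreal F"
    by (rule linear_continuous_if_bounded_on_nhd[OF X F(1) W(1,2)])
  moreover have "ereal (F x) \<le> k x" for x
  proof -
    have "ereal (F x) \<le> ereal (infconv x)" using F(2) by simp
    also have "\<dots> \<le> k x" by (rule infconv_le_k)
    finally show ?thesis .
  qed
  moreover have "0 < F y" using F(3) infconv_lower_bound[OF below] c(1) by simp
  ultimately show ?thesis using that F(1) by blast
qed

section \<open>Weak* closed subspaces of the dual\<close>

lemma vdual_Xs_iff: "f \<in> vdual (Xs T) \<longleftrightarrow> linear f \<and> continuous_map T euclideanreal f"
proof -
  have "vlinear_fun (Xs T) f \<longleftrightarrow> linear f"
    unfolding vlinear_fun_def Xs_def by (auto intro: linearI simp: linear_add linear_cmul)
  then show ?thesis unfolding vdual_def Xs_def by simp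
qed

lemma subdiff0_Xs_iff:
  "h \<in> subdiff0 (Xs T) g \<longleftrightarrow> linear h \<and> continuous_map T euclideanreal h \<and> (\<forall>x. ereal (h x) \<le> g x)"
  unfolding subdiff0_def vdual_Xs_iff by (simp add: Xs_def)

lemma cone_diff_Xs: "cone_diff (Xs T) B b = {(\<lambda>v. t * (f v - b v)) | t f. 0 \<le> t \<and> f \<in> B}"
  unfolding cone_diff_def by (simp add: Xs_def restrict_UNIV)

lemma topspace_wstar: "topspace (wstar V) = vdual V"
proof -
  have "vdual V \<subseteq> topspace (product_topology (\<lambda>_. euclideanreal) (vcarrier V))"
    unfolding topspace_product_topology vdual_def by (auto simp: PiE_def)
  then show ?thesis unfolding wstar_def by auto
qed

lemma continuous_map_wstar_eval:
  "v \<in> vcarrier V \<Longrightarrow> continuous_map (wstar V) euclideanreal (\<lambda>f. f v)"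
  unfolding wstar_def by (intro continuous_map_from_subtopology continuous_map_product_projection)

lemma continuous_map_wstar_iff:
  "continuous_map X (wstar V) F \<longleftrightarrow>
     F ` topspace X \<subseteq> vdual V \<and> (\<forall>v\<in>vcarrier V. continuous_map X euclideanreal (\<lambda>x. F x v))"
  unfolding wstar_def continuous_map_in_subtopology continuous_map_componentwise
  by (auto simp: vdual_def)

definition function_subspace :: "('i \<Rightarrow> real) set \<Rightarrow> bool" where
  "function_subspace K \<longleftrightarrow> (\<lambda>_. 0) \<in> K \<and>
     (\<forall>f\<in>K. \<forall>h\<in>K. (\<lambda>i. f i + h i) \<in> K) \<and> (\<forall>c. \<forall>f\<in>K. (\<lambda>i. c * f i) \<in> K)"

lemma dual_subspace_Xs_iff:
  "dual_subspace (Xs T) K \<longleftrightarrow> K \<subseteq> vdual (Xs T) \<and> function_subspace K"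
  unfolding dual_subspace_def function_subspace_def dzero_def by (simp add: Xs_def restrict_UNIV)

lemma function_subspaceD:
  assumes "function_subspace K"
  shows "(\<lambda>_. 0) \<in> K" "f \<in> K \<Longrightarrow> h \<in> K \<Longrightarrow> (\<lambda>i. f i + h i) \<in> K"
    "f \<in> K \<Longrightarrow> (\<lambda>i. c * f i) \<in> K"
  using assms unfolding function_subspace_def by blast+

lemma function_subspace_eliminate:
  assumes K: "function_subspace K" and p: "p \<in> K"
  shows "function_subspace ((\<lambda>f i. f i - f j * p i) ` K)"
proof -
  let ?P = "\<lambda>f i. f i - f j * p i"
  have zero: "(\<lambda>_. 0) \<in> K" and add: "\<And>f h. f \<in> K \<Longrightarrow> h \<in> K \<Longrightarrow> (\<lambda>i. f i + h i) \<in> K"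
    and scale: "\<And>c f. f \<in> K \<Longrightarrow> (\<lambda>i. c * f i) \<in> K"
    using K unfolding function_subspace_def by blast+
  have "(\<lambda>_. 0) = ?P (\<lambda>_. 0)" by simp
  moreover have "(\<lambda>i. ?P f i + ?P h i) = ?P (\<lambda>i. f i + h i)" for f h
    by (simp add: fun_eq_iff algebra_simps)
  moreover have "(\<lambda>i. c * ?P f i) = ?P (\<lambda>i. c * f i)" for c f
    by (simp add: fun_eq_iff algebra_simps)
  ultimately show ?thesis
    unfolding function_subspace_def using zero add scale by (auto intro!: image_eqI)
qed

lemma sum_fun_upd_insert:
  assumes "finite I" "j \<notin> I"
  shows "(\<Sum>i\<in>insert j I. (a(j := b)) i * f i) = b * f j + (\<Sum>i\<in>I. a i * f i)"
proof -
  have "(\<Sum>i\<in>I. (a(j := b)) i * f i) = (\<Sum>i\<in>I. a i * f i)"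
    using assms(2) by (intro sum.cong) auto
  then show ?thesis using assms by simp
qed

lemma separating_coordinate_combination_pivot:
  assumes I: "finite I" "j \<notin> I"
    and IH: "\<And>K \<phi>. function_subspace K \<Longrightarrow> (\<And>f. f \<in> K \<Longrightarrow> \<exists>i\<in>I. f i \<noteq> \<phi> i) \<Longrightarrow>
               \<exists>a. (\<forall>f\<in>K. (\<Sum>i\<in>I. a i * f i) = 0) \<and> (\<Sum>i\<in>I. a i * \<phi> i) \<noteq> 0"
    and K: "function_subspace K" and p: "p \<in> K" "p j = 1"
    and sep: "\<And>f. f \<in> K \<Longrightarrow> \<exists>i\<in>insert j I. f i \<noteq> \<phi> i"
  shows "\<exists>a. (\<forall>f\<in>K. (\<Sum>i\<in>insert j I. a i * f i) = 0) \<and> (\<Sum>i\<in>insert j I. a i * \<phi> i) \<noteq> 0"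
proof -
  define P where "P f = (\<lambda>i. f i - f j * p i)" for f :: "'a \<Rightarrow> real"
  have K': "function_subspace (P ` K)"
    unfolding P_def by (rule function_subspace_eliminate[OF K p(1)])
  have sep': "\<exists>i\<in>I. f i \<noteq> P \<phi> i" if f: "f \<in> P ` K" for f
  proof (rule ccontr)
    obtain f0 where f0: "f0 \<in> K" "f = P f0" using f by blast
    assume "\<not> (\<exists>i\<in>I. f i \<noteq> P \<phi> i)"
    then have eq: "f0 i - f0 j * p i = \<phi> i - \<phi> j * p i" if "i \<in> I" for i
      using that f0(2) unfolding P_def by auto
    have "(\<lambda>i. f0 i + (\<phi> j - f0 j) * p i) \<in> K"
      using function_subspaceD(2)[OF K f0(1) function_subspaceD(3)[OF K p(1)]] .
    moreover have "f0 i + (\<phi> j - f0 j) * p i = \<phi> i" if "i \<in> insert j I" for i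
      using that eq[of i] p(2) by (auto simp: algebra_simps)
    ultimately show False using sep by fastforce
  qed
  obtain a where a: "\<forall>f\<in>P ` K. (\<Sum>i\<in>I. a i * f i) = 0" "(\<Sum>i\<in>I. a i * P \<phi> i) \<noteq> 0"
    using IH[OF K' sep'] by blast
  define b where "b = - (\<Sum>i\<in>I. a i * p i)"
  have reduce: "(\<Sum>i\<in>insert j I. (a(j := b)) i * f i) = (\<Sum>i\<in>I. a i * P f i)" for f
  proof -
    have "(\<Sum>i\<in>I. a i * P f i) = (\<Sum>i\<in>I. a i * f i) - f j * (\<Sum>i\<in>I. a i * p i)"
      unfolding P_def by (simp add: algebra_simps sum_subtractf sum_distrib_left)
    then show ?thesis unfolding sum_fun_upd_insert[OF I] b_def by simp
  qed
  show ?thesis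
  proof (intro exI[of _ "a(j := b)"] conjI ballI)
    show "(\<Sum>i\<in>insert j I. (a(j := b)) i * f i) = 0" if "f \<in> K" for f
      unfolding reduce using a(1) that by blast
    show "(\<Sum>i\<in>insert j I. (a(j := b)) i * \<phi> i) \<noteq> 0" unfolding reduce by (rule a(2))
  qed
qed

lemma separating_coordinate_combination_null:
  fixes K :: "('i \<Rightarrow> real) set"
  assumes I: "finite I" "j \<notin> I"
    and IH: "\<And>\<phi>. (\<And>f. f \<in> K \<Longrightarrow> \<exists>i\<in>I. f i \<noteq> \<phi> i) \<Longrightarrow>
               \<exists>a. (\<forall>f\<in>K. (\<Sum>i\<in>I. a i * f i) = 0) \<and> (\<Sum>i\<in>I. a i * \<phi> i) \<noteq> 0"
    and null: "\<And>f. f \<in> K \<Longrightarrow> f j = 0"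
    and sep: "\<And>f. f \<in> K \<Longrightarrow> \<exists>i\<in>insert j I. f i \<noteq> \<phi> i"
  shows "\<exists>a. (\<forall>f\<in>K. (\<Sum>i\<in>insert j I. a i * f i) = 0) \<and> (\<Sum>i\<in>insert j I. a i * \<phi> i) \<noteq> 0"
proof (cases "\<exists>f\<in>K. \<forall>i\<in>I. f i = \<phi> i")
  case True
  then have "\<phi> j \<noteq> 0" using sep null by fastforce
  show ?thesis
  proof (intro exI[of _ "(\<lambda>_. 0::real)(j := 1)"] conjI ballI)
    show "(\<Sum>i\<in>insert j I. ((\<lambda>_. 0)(j := 1)) i * f i) = 0" if "f \<in> K" for f
      unfolding sum_fun_upd_insert[OF I] using null[OF that] by simp
    show "(\<Sum>i\<in>insert j I. ((\<lambda>_. 0)(j := 1)) i * \<phi> i) \<noteq> 0"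
      unfolding sum_fun_upd_insert[OF I] using \<open>\<phi> j \<noteq> 0\<close> by simp
  qed
next
  case False
  then obtain a where a: "\<forall>f\<in>K. (\<Sum>i\<in>I. a i * f i) = 0" "(\<Sum>i\<in>I. a i * \<phi> i) \<noteq> 0"
    using IH by blast
  show ?thesis
  proof (intro exI[of _ "a(j := 0)"] conjI ballI)
    show "(\<Sum>i\<in>insert j I. (a(j := 0)) i * f i) = 0" if "f \<in> K" for f
      unfolding sum_fun_upd_insert[OF I] using a(1) that by simp
    show "(\<Sum>i\<in>insert j I. (a(j := 0)) i * \<phi> i) \<noteq> 0"
      unfolding sum_fun_upd_insert[OF I] using a(2) by simp
  qed
qed

lemma separating_coordinate_combination:
  assumes "finite I" and "function_subspace K" and "\<And>f. f \<in> K \<Longrightarrow> \<exists>i\<in>I. f i \<noteq> \<phi> i"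
  shows "\<exists>a. (\<forall>f\<in>K. (\<Sum>i\<in>I. a i * f i) = 0) \<and> (\<Sum>i\<in>I. a i * \<phi> i) \<noteq> 0"
  using assms
proof (induction I arbitrary: K \<phi> rule: finite_induct)
  case empty
  then show ?case using function_subspaceD(1) by blast
next
  case (insert j I)
  show ?case
  proof (cases "\<exists>p\<in>K. p j \<noteq> 0")
    case True
    then obtain p where p: "p \<in> K" "p j \<noteq> 0" by blast
    define q where "q = (\<lambda>i. (1 / p j) * p i)"
    have "q \<in> K" unfolding q_def using function_subspaceD(3)[OF insert.prems(1) p(1)] .
    moreover have "q j = 1" unfolding q_def using p(2) by simp
    ultimately show ?thesis
      using separating_coordinate_combination_pivot[OF insert.hyps insert.IH insert.prems(1)]
        insert.prems(2) by blast
  next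
    case False
    then show ?thesis
      using separating_coordinate_combination_null[OF insert.hyps insert.IH[OF insert.prems(1)]]
        insert.prems(2) by blast
  qed
qed

lemma wstar_closed_finite_witness:
  assumes K: "closedin (wstar (Xs T)) K" and \<phi>: "\<phi> \<in> vdual (Xs T)" "\<phi> \<notin> K"
  obtains I where "finite I" "\<And>\<psi>. \<psi> \<in> K \<Longrightarrow> \<exists>i\<in>I. \<psi> i \<noteq> \<phi> i"
proof -
  let ?P = "product_topology (\<lambda>_::'a. euclideanreal) UNIV"
  have "openin (wstar (Xs T)) (vdual (Xs T) - K)"
    using K by (simp add: closedin_def topspace_wstar)
  then obtain U where U: "openin ?P U" "vdual (Xs T) - K = U \<inter> vdual (Xs T)"
    unfolding wstar_def openin_subtopology by (auto simp: Xs_def)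
  then have "\<phi> \<in> U" using \<phi> by blast
  then have "\<exists>B. finite {i \<in> UNIV. B i \<noteq> topspace euclideanreal} \<and>
      (\<forall>i\<in>UNIV. openin euclideanreal (B i)) \<and> \<phi> \<in> Pi\<^sub>E UNIV B \<and> Pi\<^sub>E UNIV B \<subseteq> U"
    using U(1) unfolding openin_product_topology_alt by blast
  then obtain B where B: "finite {i. B i \<noteq> UNIV}" "\<phi> \<in> Pi\<^sub>E UNIV B" "Pi\<^sub>E UNIV B \<subseteq> U"
    by auto
  have "\<exists>i\<in>{i. B i \<noteq> UNIV}. \<psi> i \<noteq> \<phi> i" if "\<psi> \<in> K" for \<psi>
  proof (rule ccontr)
    assume "\<not> ?thesis"
    then have "\<psi> i \<in> B i" for i using B(2) by (cases "B i = UNIV") (auto simp: PiE_def Pi_def)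
    then have "\<psi> \<in> Pi\<^sub>E UNIV B" by (simp add: PiE_def Pi_def)
    moreover have "\<psi> \<in> vdual (Xs T)" using closedin_subset[OF K] that topspace_wstar by auto
    ultimately show False using B(3) U(2) that by blast
  qed
  then show ?thesis using that B(1) by blast
qed

theorem wstar_closed_subspace_separation:
  assumes K: "closedin (wstar (Xs T)) K" "dual_subspace (Xs T) K"
    and \<phi>: "\<phi> \<in> vdual (Xs T)" "\<phi> \<notin> K"
  obtains x where "\<And>\<psi>. \<psi> \<in> K \<Longrightarrow> \<psi> x = 0" "\<phi> x \<noteq> 0"
proof -
  obtain I where I: "finite I" "\<And>\<psi>. \<psi> \<in> K \<Longrightarrow> \<exists>i\<in>I. \<psi> i \<noteq> \<phi> i"
    using wstar_closed_finite_witness[OF K(1) \<phi>] by blast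
  obtain a where a: "\<forall>\<psi>\<in>K. (\<Sum>i\<in>I. a i * \<psi> i) = 0" "(\<Sum>i\<in>I. a i * \<phi> i) \<noteq> 0"
    using separating_coordinate_combination[OF I(1) _ I(2)] K(2) unfolding dual_subspace_Xs_iff by blast
  have eval: "f (\<Sum>i\<in>I. a i *\<^sub>R i) = (\<Sum>i\<in>I. a i * f i)" if "f \<in> vdual (Xs T)" for f
    using that unfolding vdual_Xs_iff by (simp add: linear_sum linear_cmul)
  have "\<psi> (\<Sum>i\<in>I. a i *\<^sub>R i) = 0" if "\<psi> \<in> K" for \<psi>
  proof -
    have "\<psi> \<in> vdual (Xs T)" using K(2) that unfolding dual_subspace_Xs_iff by blast
    then have "\<psi> (\<Sum>i\<in>I. a i *\<^sub>R i) = (\<Sum>i\<in>I. a i * \<psi> i)" by (rule eval)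
    then show ?thesis using a(1) that by simp
  qed
  moreover have "\<phi> (\<Sum>i\<in>I. a i *\<^sub>R i) \<noteq> 0" using a(2) eval[OF \<phi>(1)] by simp
  ultimately show ?thesis using that by blast
qed

definition annihilator :: "'a::real_vector topology \<Rightarrow> 'a set \<Rightarrow> ('a \<Rightarrow> real) set" where
  "annihilator T L = {f \<in> vdual (Xs T). \<forall>l\<in>L. f l = 0}"

lemma closedin_annihilator: "closedin (wstar (Xs T)) (annihilator T L)"
proof -
  let ?W = "wstar (Xs T)"
  have zero: "closedin euclideanreal {0::real}" using closed_closedin closed_singleton by blast
  have "closedin ?W {f \<in> topspace ?W. f l \<in> {0}}" for l
    by (rule closedin_continuous_map_preimage[OF _ zero]) (rule continuous_map_wstar_eval, simp add: Xs_def)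
  then have "closedin ?W (\<Inter>(insert (topspace ?W) ((\<lambda>l. {f \<in> topspace ?W. f l \<in> {0}}) ` L)))"
    by (intro closedin_Inter) auto
  moreover have "annihilator T L = \<Inter>(insert (topspace ?W) ((\<lambda>l. {f \<in> topspace ?W. f l \<in> {0}}) ` L))"
    unfolding annihilator_def topspace_wstar by auto
  ultimately show ?thesis by simp
qed

lemma dual_subspace_annihilator: "dual_subspace (Xs T) (annihilator T L)"
  unfolding dual_subspace_Xs_iff function_subspace_def
proof (intro conjI ballI allI)
  show "annihilator T L \<subseteq> vdual (Xs T)" unfolding annihilator_def by blast
  show "(\<lambda>_. 0) \<in> annihilator T L"
    unfolding annihilator_def vdual_Xs_iff by (auto intro: linearI)
  show "(\<lambda>v. f v + h v) \<in> annihilator T L" if "f \<in> annihilator T L" "h \<in> annihilator T L" for f h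
    using that unfolding annihilator_def vdual_Xs_iff
    by (auto intro!: linearI continuous_map_add simp: linear_add linear_cmul algebra_simps)
  show "(\<lambda>v. c * f v) \<in> annihilator T L" if "f \<in> annihilator T L" for c f
    using that unfolding annihilator_def vdual_Xs_iff
    by (auto intro!: linearI continuous_map_real_mult_left simp: linear_add linear_cmul algebra_simps)
qed

lemma annihilator_subset_closed_subspace:
  assumes K: "closedin (wstar (Xs T)) K" "dual_subspace (Xs T) K"
    and L: "\<And>x. (\<And>\<psi>. \<psi> \<in> K \<Longrightarrow> \<psi> x = 0) \<Longrightarrow> x \<in> L"
  shows "annihilator T L \<subseteq> K"
proof
  fix f assume f: "f \<in> annihilator T L"
  show "f \<in> K"
  proof (rule ccontr)
    assume "f \<notin> K"
    then obtain x where "\<And>\<psi>. \<psi> \<in> K \<Longrightarrow> \<psi> x = 0" "f x \<noteq> 0"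
      using wstar_closed_subspace_separation[OF K] f unfolding annihilator_def by blast
    then show False using L f unfolding annihilator_def by blast
  qed
qed

section \<open>The quotient by a linear subspace and its dual\<close>

lemma mem_coset: "y \<in> coset L x \<longleftrightarrow> y - x \<in> L"
proof
  show "y \<in> coset L x \<Longrightarrow> y - x \<in> L" unfolding coset_def by auto
  assume "y - x \<in> L"
  then show "y \<in> coset L x" unfolding coset_def by (rule rev_image_eqI) simp
qed

lemma coset_zero: "coset L 0 = L"
  unfolding coset_def by simp

lemma vcarrier_Xquot: "vcarrier (Xquot T L) = range (coset L)"
  by (simp add: Xquot_def)

lemma vzero_Xquot: "vzero (Xquot T L) = coset L 0"
  by (simp add: Xquot_def coset_zero)

lemma vtop_Xquot: "vtop (Xquot T L) = quot_top T L"
  by (simp add: Xquot_def)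

lemma istopology_quot_top:
  "istopology (\<lambda>U. U \<subseteq> range (coset L) \<and> openin T {x \<in> topspace T. coset L x \<in> U})"
  unfolding istopology_def
proof (rule conjI; intro allI impI)
  fix U V
  assume "U \<subseteq> range (coset L) \<and> openin T {x \<in> topspace T. coset L x \<in> U}"
    and "V \<subseteq> range (coset L) \<and> openin T {x \<in> topspace T. coset L x \<in> V}"
  moreover have "{x \<in> topspace T. coset L x \<in> U \<inter> V} =
      {x \<in> topspace T. coset L x \<in> U} \<inter> {x \<in> topspace T. coset L x \<in> V}" by blast
  ultimately show "U \<inter> V \<subseteq> range (coset L) \<and> openin T {x \<in> topspace T. coset L x \<in> U \<inter> V}"
    by auto
next
  fix \<U> assume \<U>: "\<forall>U\<in>\<U>. U \<subseteq> range (coset L) \<and> openin T {x \<in> topspace T. coset L x \<in> U}"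
  have "{x \<in> topspace T. coset L x \<in> \<Union>\<U>} = (\<Union>U\<in>\<U>. {x \<in> topspace T. coset L x \<in> U})" by blast
  moreover have "openin T (\<Union>U\<in>\<U>. {x \<in> topspace T. coset L x \<in> U})"
    using \<U> by (intro openin_Union) blast
  ultimately show "\<Union>\<U> \<subseteq> range (coset L) \<and> openin T {x \<in> topspace T. coset L x \<in> \<Union>\<U>}"
    using \<U> by auto
qed

lemma openin_quot_top:
  "openin (quot_top T L) U \<longleftrightarrow> U \<subseteq> range (coset L) \<and> openin T {x \<in> topspace T. coset L x \<in> U}"
  unfolding quot_top_def by (simp add: topology_inverse'[OF istopology_quot_top])

lemma topspace_quot_top: "topspace (quot_top T L) = range (coset L)"
proof
  show "topspace (quot_top T L) \<subseteq> range (coset L)"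
    unfolding topspace_def openin_quot_top by blast
  have "openin (quot_top T L) (range (coset L))" by (simp add: openin_quot_top)
  then show "range (coset L) \<subseteq> topspace (quot_top T L)" by (rule openin_subset)
qed

lemma continuous_map_coset: "continuous_map T (quot_top T L) (coset L)"
  unfolding continuous_map_def topspace_quot_top by (auto simp: openin_quot_top)

lemma continuous_map_quot_top_iff:
  "continuous_map (quot_top T L) Y f \<longleftrightarrow>
     f \<in> range (coset L) \<rightarrow> topspace Y \<and> continuous_map T Y (\<lambda>x. f (coset L x))"
proof
  assume f: "continuous_map (quot_top T L) Y f"
  then show "f \<in> range (coset L) \<rightarrow> topspace Y \<and> continuous_map T Y (\<lambda>x. f (coset L x))"
    using continuous_map_compose[OF continuous_map_coset f]
    unfolding continuous_map_def topspace_quot_top by (simp add: o_def)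
next
  assume f: "f \<in> range (coset L) \<rightarrow> topspace Y \<and> continuous_map T Y (\<lambda>x. f (coset L x))"
  show "continuous_map (quot_top T L) Y f"
    unfolding continuous_map_def topspace_quot_top
  proof (intro conjI allI impI)
    show "f \<in> range (coset L) \<rightarrow> topspace Y" using f by blast
    fix V assume "openin Y V"
    then have "openin T {x \<in> topspace T. f (coset L x) \<in> V}"
      using f unfolding continuous_map_def by blast
    then show "openin (quot_top T L) {A \<in> range (coset L). f A \<in> V}"
      unfolding openin_quot_top by simp
  qed
qed

definition quot_lift :: "'a::real_vector set \<Rightarrow> ('a set \<Rightarrow> real) \<Rightarrow> 'a \<Rightarrow> real" where
  "quot_lift L \<phi> = (\<lambda>x. \<phi> (coset L x))"

definition quot_descend :: "'a::real_vector set \<Rightarrow> ('a \<Rightarrow> real) \<Rightarrow> 'a set \<Rightarrow> real" where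
  "quot_descend L f = restrict (\<lambda>A. f (SOME x. x \<in> A)) (range (coset L))"

context
  fixes L :: "'a::real_vector set"
  assumes L: "subspace L"
begin

lemma coset_self: "x \<in> coset L x"
  using subspace_0[OF L] by (simp add: mem_coset)

lemma coset_eq_iff: "coset L x = coset L y \<longleftrightarrow> x - y \<in> L"
proof
  assume "coset L x = coset L y"
  then show "x - y \<in> L" using coset_self[of x] by (simp add: mem_coset)
next
  assume xy: "x - y \<in> L"
  show "coset L x = coset L y"
  proof (rule set_eqI)
    fix z
    have "z - y = (z - x) + (x - y)" "z - x = (z - y) - (x - y)" by simp_all
    then show "z \<in> coset L x \<longleftrightarrow> z \<in> coset L y"
      unfolding mem_coset using subspace_add[OF L] subspace_diff[OF L] xy by metis
  qed
qed

lemma some_mem_coset: "(SOME z. z \<in> coset L x) - x \<in> L"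
  using someI[of "\<lambda>z. z \<in> coset L x" x] coset_self by (simp add: mem_coset)

lemma vadd_Xquot_coset: "vadd (Xquot T L) (coset L x) (coset L y) = coset L (x + y)"
proof (rule set_eqI)
  fix z
  have "(\<exists>a b. z = a + b \<and> a - x \<in> L \<and> b - y \<in> L) \<longleftrightarrow> z - (x + y) \<in> L"
  proof
    assume "\<exists>a b. z = a + b \<and> a - x \<in> L \<and> b - y \<in> L"
    then obtain a b where "z = a + b" "a - x \<in> L" "b - y \<in> L" by blast
    then show "z - (x + y) \<in> L" using subspace_add[OF L, of "a - x" "b - y"] by (simp add: algebra_simps)
  next
    assume "z - (x + y) \<in> L"
    then have "z = (z - y) + y \<and> (z - y) - x \<in> L \<and> y - y \<in> L"
      using subspace_0[OF L] by (simp add: algebra_simps)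
    then show "\<exists>a b. z = a + b \<and> a - x \<in> L \<and> b - y \<in> L" by blast
  qed
  then show "z \<in> vadd (Xquot T L) (coset L x) (coset L y) \<longleftrightarrow> z \<in> coset L (x + y)"
    by (auto simp: Xquot_def mem_coset)
qed

lemma vscale_Xquot_coset: "vscale (Xquot T L) c (coset L x) = coset L (c *\<^sub>R x)"
proof (rule set_eqI)
  fix z
  have "(\<exists>a l. z = c *\<^sub>R a + l \<and> a - x \<in> L \<and> l \<in> L) \<longleftrightarrow> z - c *\<^sub>R x \<in> L"
  proof
    assume "\<exists>a l. z = c *\<^sub>R a + l \<and> a - x \<in> L \<and> l \<in> L"
    then obtain a l where "z = c *\<^sub>R a + l" "a - x \<in> L" "l \<in> L" by blast
    then show "z - c *\<^sub>R x \<in> L"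
      using subspace_add[OF L subspace_scale[OF L, of "a - x" c], of l] by (simp add: algebra_simps)
  next
    assume "z - c *\<^sub>R x \<in> L"
    then have "z = c *\<^sub>R x + (z - c *\<^sub>R x) \<and> x - x \<in> L \<and> z - c *\<^sub>R x \<in> L"
      using subspace_0[OF L] by simp
    then show "\<exists>a l. z = c *\<^sub>R a + l \<and> a - x \<in> L \<and> l \<in> L" by blast
  qed
  then show "z \<in> vscale (Xquot T L) c (coset L x) \<longleftrightarrow> z \<in> coset L (c *\<^sub>R x)"
    by (auto simp: Xquot_def mem_coset)
qed

lemma vneg_Xquot_coset: "vneg (Xquot T L) (coset L x) = coset L (- x)"
  unfolding vneg_def vscale_Xquot_coset by simp

lemma vdual_Xquot_iff:
  "\<phi> \<in> vdual (Xquot T L) \<longleftrightarrow> \<phi> \<in> extensional (range (coset L)) \<and> quot_lift L \<phi> \<in> vdual (Xs T)"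
proof -
  have "vlinear_fun (Xquot T L) \<phi> \<longleftrightarrow> linear (quot_lift L \<phi>)"
    unfolding vlinear_fun_def vcarrier_Xquot quot_lift_def linear_iff
    by (simp add: vadd_Xquot_coset vscale_Xquot_coset)
  moreover have "continuous_map (quot_top T L) euclideanreal \<phi> \<longleftrightarrow>
      continuous_map T euclideanreal (quot_lift L \<phi>)"
    unfolding continuous_map_quot_top_iff quot_lift_def by simp
  ultimately show ?thesis
    unfolding vdual_Xs_iff by (auto simp: vdual_def vcarrier_Xquot vtop_Xquot)
qed

lemma quot_lift_annihilator:
  assumes \<phi>: "\<phi> \<in> vdual (Xquot T L)"
  shows "quot_lift L \<phi> \<in> annihilator T L"
proof -
  have lin: "linear (quot_lift L \<phi>)" using \<phi> unfolding vdual_Xquot_iff vdual_Xs_iff by blast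
  have "quot_lift L \<phi> l = 0" if "l \<in> L" for l
  proof -
    have "coset L l = coset L 0" using that by (simp add: coset_eq_iff)
    then show ?thesis using linear_0[OF lin] unfolding quot_lift_def by simp
  qed
  then show ?thesis using \<phi> unfolding annihilator_def vdual_Xquot_iff by blast
qed

lemma quot_descend_coset:
  assumes f: "f \<in> annihilator T L"
  shows "quot_descend L f (coset L x) = f x"
proof -
  have "linear f" using f unfolding annihilator_def vdual_Xs_iff by blast
  then have "f (SOME z. z \<in> coset L x) - f x = f ((SOME z. z \<in> coset L x) - x)"
    by (simp add: linear_diff)
  also have "\<dots> = 0" using f some_mem_coset unfolding annihilator_def by blast
  finally show ?thesis unfolding quot_descend_def by simp
qed

lemma quot_lift_descend: "f \<in> annihilator T L \<Longrightarrow> quot_lift L (quot_descend L f) = f"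
  unfolding quot_lift_def by (simp add: quot_descend_coset)

lemma quot_descend_lift:
  assumes \<phi>: "\<phi> \<in> vdual (Xquot T L)"
  shows "quot_descend L (quot_lift L \<phi>) = \<phi>"
proof
  fix A
  show "quot_descend L (quot_lift L \<phi>) A = \<phi> A"
  proof (cases "A \<in> range (coset L)")
    case True
    then obtain x where "A = coset L x" by blast
    then show ?thesis
      using quot_descend_coset[OF quot_lift_annihilator[OF \<phi>]] by (simp add: quot_lift_def)
  next
    case False
    then show ?thesis
      using \<phi> unfolding vdual_Xquot_iff quot_descend_def by (simp add: extensional_def)
  qed
qed

lemma quot_descend_vdual: "f \<in> annihilator T L \<Longrightarrow> quot_descend L f \<in> vdual (Xquot T L)"
  unfolding vdual_Xquot_iff using quot_lift_descend[of f]
  by (auto simp: quot_descend_def annihilator_def)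

lemma homeomorphic_maps_quot_dual:
  "homeomorphic_maps (wstar (Xquot T L)) (subtopology (wstar (Xs T)) (annihilator T L))
     (quot_lift L) (quot_descend L)"
  unfolding homeomorphic_maps_def topspace_subtopology topspace_wstar
proof (intro conjI ballI)
  show "continuous_map (wstar (Xquot T L)) (subtopology (wstar (Xs T)) (annihilator T L)) (quot_lift L)"
    unfolding continuous_map_in_subtopology continuous_map_wstar_iff topspace_wstar
    using quot_lift_annihilator continuous_map_wstar_eval[of "coset L _" "Xquot T L"]
    by (auto simp: annihilator_def quot_lift_def vcarrier_Xquot Xs_def)
  have "continuous_map (subtopology (wstar (Xs T)) (annihilator T L)) euclideanreal
      (\<lambda>f. quot_descend L f A)" if "A \<in> range (coset L)" for A
    using that continuous_map_from_subtopology[OF continuous_map_wstar_eval[of "SOME x. x \<in> A" "Xs T"]]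
    by (simp add: quot_descend_def Xs_def)
  then show "continuous_map (subtopology (wstar (Xs T)) (annihilator T L)) (wstar (Xquot T L)) (quot_descend L)"
    unfolding continuous_map_wstar_iff topspace_subtopology topspace_wstar vcarrier_Xquot
    using quot_descend_vdual by blast
qed (auto simp: quot_descend_lift quot_lift_descend annihilator_def)

end

section \<open>The quotient of a sublinear function by its lineality space\<close>

locale sublinear_quotient =
  fixes T :: "'a::real_vector topology" and g :: "'a \<Rightarrow> ereal" and xs :: "'a \<Rightarrow> real"
  assumes hlcs: "is_hlcs (Xs T)" and g_Gamma: "Gamma (Xs T) g"
    and g_sublinear: "vsublinear (Xs T) g" and xs_subgradient: "xs \<in> subdiff0 (Xs T) g"
begin

definition lineality :: "'a set" where
  "lineality = {x. g x = ereal (xs x) \<and> g (- x) = ereal (- xs x)}"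

definition g_shift :: "'a \<Rightarrow> ereal" where
  "g_shift x = g x - ereal (xs x)"

lemma g_not_MInf: "g x \<noteq> -\<infinity>"
  using g_Gamma unfolding Gamma_def vproper_def Xs_def by simp

lemma g_scaleR: "0 < t \<Longrightarrow> g (t *\<^sub>R x) = ereal t * g x"
  using g_sublinear unfolding vsublinear_def Xs_def by simp

lemma g_add: "g (x + y) \<le> g x + g y"
  using g_sublinear unfolding vsublinear_def Xs_def by simp

lemma xs_linear: "linear xs" and xs_continuous: "continuous_map T euclideanreal xs"
  and xs_le_g: "ereal (xs x) \<le> g x"
  using xs_subgradient unfolding subdiff0_Xs_iff by auto

lemma ereal_le_g_shift_iff: "ereal a \<le> g_shift x \<longleftrightarrow> ereal (a + xs x) \<le> g x"
  unfolding g_shift_def using g_not_MInf[of x] by (cases "g x") auto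

lemma g_shift_nonneg: "0 \<le> g_shift x"
  using xs_le_g[of x] g_not_MInf[of x] unfolding g_shift_def by (cases "g x") auto

lemma g_shift_zero: "g_shift 0 = 0"
  using g_sublinear linear_0[OF xs_linear] unfolding g_shift_def vsublinear_def Xs_def by simp

lemma g_shift_scaleR: "0 < t \<Longrightarrow> g_shift (t *\<^sub>R x) = ereal t * g_shift x"
  unfolding g_shift_def using g_scaleR[of t x] linear_cmul[OF xs_linear, of t x] g_not_MInf[of x]
  by (cases "g x") (auto simp: right_diff_distrib)

lemma g_shift_add: "g_shift (x + y) \<le> g_shift x + g_shift y"
  unfolding g_shift_def linear_add[OF xs_linear]
  using g_add[of x y] g_not_MInf[of x] g_not_MInf[of y] g_not_MInf[of "x + y"]
  by (cases "g x"; cases "g y"; cases "g (x + y)") auto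

lemma g_shift_lsc: "openin T {x. ereal c < g_shift x}"
proof -
  have "{x. ereal c < g_shift x} = (\<Union>d. {x. ereal d < g x} \<inter> {x. xs x \<in> {..<d - c}})"
  proof (rule set_eqI)
    fix x
    have "ereal c < g_shift x \<longleftrightarrow> ereal (c + xs x) < g x"
      unfolding g_shift_def using g_not_MInf[of x] by (cases "g x") auto
    also have "\<dots> \<longleftrightarrow> (\<exists>d. ereal (c + xs x) < ereal d \<and> ereal d < g x)"
      using ereal_dense2 less_trans by blast
    finally show "x \<in> {x. ereal c < g_shift x} \<longleftrightarrow>
        x \<in> (\<Union>d. {x. ereal d < g x} \<inter> {x. xs x \<in> {..<d - c}})"
      by auto
  qed
  moreover have "openin T {x. ereal d < g x}" for d
    using g_Gamma unfolding Gamma_def vlsc_def Xs_def by (simp add: hlcs_topspace[OF hlcs])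
  moreover have "openin T {x. xs x \<in> {..<d - c}}" for d
    using openin_continuous_map_preimage[OF xs_continuous, of "{..<d - c}"]
    by (simp add: hlcs_topspace[OF hlcs])
  ultimately show ?thesis by (auto intro!: openin_Union openin_Int)
qed

lemma g_shift_eq_0_iff: "g_shift x = 0 \<longleftrightarrow> g x = ereal (xs x)"
  unfolding g_shift_def using g_not_MInf[of x] by (cases "g x") auto

lemma mem_lineality_iff: "x \<in> lineality \<longleftrightarrow> g_shift x = 0 \<and> g_shift (- x) = 0"
  unfolding lineality_def g_shift_eq_0_iff by (simp add: linear_neg[OF xs_linear])

lemma subspace_lineality: "subspace lineality"
  unfolding subspace_def
proof (intro conjI ballI allI)
  show "0 \<in> lineality" unfolding mem_lineality_iff by (simp add: g_shift_zero)
  have le0: "g_shift x \<le> 0 \<Longrightarrow> g_shift x = 0" for x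
    using g_shift_nonneg[of x] by simp
  show "x + y \<in> lineality" if "x \<in> lineality" "y \<in> lineality" for x y
    using that g_shift_add[of x y] g_shift_add[of "- x" "- y"] le0[of "x + y"] le0[of "- (x + y)"]
    unfolding mem_lineality_iff by simp
  show "c *\<^sub>R x \<in> lineality" if "x \<in> lineality" for c x
  proof -
    consider "0 < c" | "c = 0" | "c < 0" by linarith
    then show ?thesis
    proof cases
      case 1
      then show ?thesis using that g_shift_scaleR[OF 1, of x] g_shift_scaleR[OF 1, of "- x"]
        unfolding mem_lineality_iff by simp
    next
      case 2
      then show ?thesis unfolding mem_lineality_iff by (simp add: g_shift_zero)
    next
      case 3
      then have "0 < - c" by simp
      then show ?thesis using that g_shift_scaleR[of "- c" x] g_shift_scaleR[of "- c" "- x"]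
        unfolding mem_lineality_iff by simp
    qed
  qed
qed

lemma g_shift_add_lineality: "l \<in> lineality \<Longrightarrow> g_shift (x + l) = g_shift x"
  using g_shift_add[of x l] g_shift_add[of "x + l" "- l"]
  unfolding mem_lineality_iff by (simp add: antisym)

lemma ghat_coset: "ghat g xs (coset lineality x) = g_shift x"
proof -
  define z where "z = (SOME z. z \<in> coset lineality x)"
  have "g_shift (x + (z - x)) = g_shift x"
    using some_mem_coset[OF subspace_lineality] unfolding z_def by (rule g_shift_add_lineality)
  then show ?thesis unfolding ghat_def Let_def z_def[symmetric] g_shift_def by simp
qed

lemma subgradient_eq_on_lineality:
  assumes h: "h \<in> subdiff0 (Xs T) g" and l: "l \<in> lineality"
  shows "h l = xs l"
proof -
  have "ereal (h l) \<le> g l" "ereal (h (- l)) \<le> g (- l)" using h unfolding subdiff0_Xs_iff by blast+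
  moreover have "h (- l) = - h l" using h unfolding subdiff0_Xs_iff by (simp add: linear_neg)
  ultimately show ?thesis using l unfolding lineality_def by auto
qed

lemma mem_lineality_iff_subgradients_agree:
  "x \<in> lineality \<longleftrightarrow> (\<forall>h\<in>subdiff0 (Xs T) g. h x = xs x)"
proof
  show "x \<in> lineality \<Longrightarrow> \<forall>h\<in>subdiff0 (Xs T) g. h x = xs x"
    using subgradient_eq_on_lineality by blast
  assume agree: "\<forall>h\<in>subdiff0 (Xs T) g. h x = xs x"
  show "x \<in> lineality"
  proof (rule ccontr)
    assume "x \<notin> lineality"
    then obtain y where y: "y = x \<or> y = - x" "0 < g_shift y"
      using g_shift_nonneg[of x] g_shift_nonneg[of "- x"] unfolding mem_lineality_iff
      by (metis order_less_le)
    obtain F where F: "linear F" "continuous_map T euclideanreal F" "\<And>z. ereal (F z) \<le> g_shift z" "0 < F y"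
      by (metis lsc_sublinear_separation[OF hlcs g_shift_nonneg g_shift_zero g_shift_add g_shift_scaleR
            g_shift_lsc y(2)])
    define h where "h z = F z + xs z" for z
    have "linear h"
      unfolding h_def by (rule linearI) (simp_all add: linear_add[OF F(1)] linear_add[OF xs_linear]
          linear_cmul[OF F(1)] linear_cmul[OF xs_linear] algebra_simps)
    moreover have "continuous_map T euclideanreal h"
      unfolding h_def by (intro continuous_map_add F(2) xs_continuous)
    moreover have "ereal (h z) \<le> g z" for z
      using F(3)[of z] unfolding h_def ereal_le_g_shift_iff .
    ultimately have "h \<in> subdiff0 (Xs T) g" unfolding subdiff0_Xs_iff by blast
    then have "h x = xs x" using agree by blast
    then have "h y = xs y" using y(1) \<open>linear h\<close> linear_neg[OF \<open>linear h\<close>] linear_neg[OF xs_linear]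
      by auto
    then show False using F(4) unfolding h_def by simp
  qed
qed

lemma subgradient_shift_annihilator:
  assumes h: "h \<in> subdiff0 (Xs T) g"
  shows "(\<lambda>x. h x - xs x) \<in> annihilator T lineality"
proof -
  have "linear h" "continuous_map T euclideanreal h" using h unfolding subdiff0_Xs_iff by blast+
  then have "linear (\<lambda>x. h x - xs x)" "continuous_map T euclideanreal (\<lambda>x. h x - xs x)"
    by (auto intro!: linearI continuous_map_diff xs_continuous
        simp: linear_add linear_cmul xs_linear algebra_simps)
  then show ?thesis
    unfolding annihilator_def vdual_Xs_iff using subgradient_eq_on_lineality[OF h] by simp
qed

lemma subdiff0_Xquot_iff:
  "\<phi> \<in> subdiff0 (Xquot T lineality) (ghat g xs) \<longleftrightarrow>
     \<phi> \<in> vdual (Xquot T lineality) \<and> (\<forall>x. ereal (\<phi> (coset lineality x)) \<le> g_shift x)"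
  unfolding subdiff0_def vcarrier_Xquot by (simp add: ghat_coset)

lemma quot_lift_subgradient:
  assumes \<phi>: "\<phi> \<in> subdiff0 (Xquot T lineality) (ghat g xs)"
  shows "(\<lambda>x. quot_lift lineality \<phi> x + xs x) \<in> subdiff0 (Xs T) g"
proof -
  have "linear (quot_lift lineality \<phi>)" "continuous_map T euclideanreal (quot_lift lineality \<phi>)"
    using \<phi> unfolding subdiff0_Xquot_iff vdual_Xquot_iff[OF subspace_lineality] vdual_Xs_iff by blast+
  moreover have "ereal (quot_lift lineality \<phi> x + xs x) \<le> g x" for x
    using \<phi> unfolding subdiff0_Xquot_iff quot_lift_def ereal_le_g_shift_iff[symmetric] by blast
  ultimately show ?thesis
    unfolding subdiff0_Xs_iff
    by (auto intro!: linearI continuous_map_add xs_continuous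
        simp: linear_add linear_cmul xs_linear algebra_simps)
qed

lemma quot_descend_subgradient:
  assumes h: "h \<in> subdiff0 (Xs T) g"
  shows "quot_descend lineality (\<lambda>x. h x - xs x) \<in> subdiff0 (Xquot T lineality) (ghat g xs)"
  unfolding subdiff0_Xquot_iff
    quot_descend_coset[OF subspace_lineality subgradient_shift_annihilator[OF h]]
  using quot_descend_vdual[OF subspace_lineality subgradient_shift_annihilator[OF h]] h
  by (simp add: subdiff0_Xs_iff ereal_le_g_shift_iff)

lemma dzero_Xquot_subgradient: "dzero (Xquot T lineality) \<in> subdiff0 (Xquot T lineality) (ghat g xs)"
proof -
  have "quot_lift lineality (dzero (Xquot T lineality)) = (\<lambda>_. 0)"
    unfolding quot_lift_def dzero_def vcarrier_Xquot by auto
  moreover have "linear (\<lambda>_::'a. 0::real)" by (rule linearI) simp_all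
  ultimately have "dzero (Xquot T lineality) \<in> vdual (Xquot T lineality)"
    unfolding vdual_Xquot_iff[OF subspace_lineality] vdual_Xs_iff
    by (simp add: dzero_def vcarrier_Xquot)
  then show ?thesis
    unfolding subdiff0_Xquot_iff using g_shift_nonneg
    by (simp add: dzero_def vcarrier_Xquot flip: zero_ereal_def)
qed

lemma quot_lift_cone:
  "quot_lift lineality ` cone_diff (Xquot T lineality) (subdiff0 (Xquot T lineality) (ghat g xs))
      (dzero (Xquot T lineality))
   = cone_diff (Xs T) (subdiff0 (Xs T) g) xs"
  (is "quot_lift lineality ` ?C = ?D")
proof
  show "quot_lift lineality ` ?C \<subseteq> ?D"
  proof
    fix c assume "c \<in> quot_lift lineality ` ?C"
    then obtain t \<phi> where t: "0 \<le> t" and \<phi>: "\<phi> \<in> subdiff0 (Xquot T lineality) (ghat g xs)"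
      and c: "c = quot_lift lineality (restrict (\<lambda>A. t * (\<phi> A - dzero (Xquot T lineality) A))
                  (range (coset lineality)))"
      unfolding cone_diff_def vcarrier_Xquot by blast
    define h where "h x = quot_lift lineality \<phi> x + xs x" for x
    have "c = (\<lambda>x. t * (h x - xs x))"
      unfolding c h_def quot_lift_def dzero_def vcarrier_Xquot by simp
    moreover have "h \<in> subdiff0 (Xs T) g" unfolding h_def by (rule quot_lift_subgradient[OF \<phi>])
    ultimately show "c \<in> ?D" unfolding cone_diff_Xs using t by blast
  qed
  show "?D \<subseteq> quot_lift lineality ` ?C"
  proof
    fix c assume "c \<in> ?D"
    then obtain t h where t: "0 \<le> t" and h: "h \<in> subdiff0 (Xs T) g"
      and c: "c = (\<lambda>x. t * (h x - xs x))"
      unfolding cone_diff_Xs by blast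
    define \<phi> where "\<phi> = quot_descend lineality (\<lambda>x. h x - xs x)"
    have "c = quot_lift lineality (restrict (\<lambda>A. t * (\<phi> A - dzero (Xquot T lineality) A))
                (range (coset lineality)))"
      unfolding c quot_lift_def dzero_def vcarrier_Xquot \<phi>_def
      using quot_descend_coset[OF subspace_lineality subgradient_shift_annihilator[OF h]] by simp
    moreover have "restrict (\<lambda>A. t * (\<phi> A - dzero (Xquot T lineality) A)) (range (coset lineality)) \<in> ?C"
      unfolding cone_diff_def vcarrier_Xquot mem_Collect_eq
      by (rule exI[of _ t], rule exI[of _ \<phi>]) (simp add: t \<phi>_def quot_descend_subgradient[OF h])
    ultimately show "c \<in> quot_lift lineality ` ?C" by blast
  qed
qed

lemma quot_cone_subset_vdual:
  "cone_diff (Xquot T lineality) (subdiff0 (Xquot T lineality) (ghat g xs)) (dzero (Xquot T lineality))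
     \<subseteq> vdual (Xquot T lineality)"
proof
  fix c assume "c \<in> cone_diff (Xquot T lineality) (subdiff0 (Xquot T lineality) (ghat g xs))
      (dzero (Xquot T lineality))"
  then obtain t \<phi> where \<phi>: "\<phi> \<in> subdiff0 (Xquot T lineality) (ghat g xs)"
    and c: "c = restrict (\<lambda>A. t * (\<phi> A - dzero (Xquot T lineality) A)) (range (coset lineality))"
    unfolding cone_diff_def vcarrier_Xquot by blast
  have "quot_lift lineality \<phi> \<in> annihilator T lineality"
    using \<phi> quot_lift_annihilator[OF subspace_lineality] unfolding subdiff0_Xquot_iff by blast
  then have "(\<lambda>x. t * quot_lift lineality \<phi> x) \<in> annihilator T lineality"
    using function_subspaceD(3) dual_subspace_annihilator unfolding dual_subspace_Xs_iff by blast
  moreover have "quot_lift lineality c = (\<lambda>x. t * quot_lift lineality \<phi> x)"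
    unfolding c quot_lift_def dzero_def vcarrier_Xquot by simp
  ultimately show "c \<in> vdual (Xquot T lineality)"
    unfolding vdual_Xquot_iff[OF subspace_lineality] c annihilator_def by auto
qed

lemma cone_subset_annihilator:
  "cone_diff (Xs T) (subdiff0 (Xs T) g) xs \<subseteq> annihilator T lineality"
  unfolding cone_diff_Xs using subgradient_shift_annihilator dual_subspace_annihilator
    function_subspaceD(3) unfolding dual_subspace_Xs_iff by blast

lemma closure_cone_subset_annihilator:
  "wstar (Xs T) closure_of cone_diff (Xs T) (subdiff0 (Xs T) g) xs \<subseteq> annihilator T lineality"
  by (rule closure_of_minimal[OF cone_subset_annihilator closedin_annihilator])

lemma dual_subspace_closure_cone_iff:
  "dual_subspace (Xs T) (wstar (Xs T) closure_of cone_diff (Xs T) (subdiff0 (Xs T) g) xs) \<longleftrightarrow>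
     wstar (Xs T) closure_of cone_diff (Xs T) (subdiff0 (Xs T) g) xs = annihilator T lineality"
  (is "dual_subspace _ ?K \<longleftrightarrow> ?K = _")
proof
  assume K: "dual_subspace (Xs T) ?K"
  have cone_K: "cone_diff (Xs T) (subdiff0 (Xs T) g) xs \<subseteq> ?K"
    using cone_subset_annihilator closure_of_subset[of _ "wstar (Xs T)"]
    unfolding topspace_wstar annihilator_def by blast
  have "x \<in> lineality" if annihilates: "\<And>\<psi>. \<psi> \<in> ?K \<Longrightarrow> \<psi> x = 0" for x
  proof -
    have "h x = xs x" if h: "h \<in> subdiff0 (Xs T) g" for h
    proof -
      have "(\<lambda>v. 1 * (h v - xs v)) \<in> cone_diff (Xs T) (subdiff0 (Xs T) g) xs"
        unfolding cone_diff_Xs mem_Collect_eq by (rule exI[of _ 1], rule exI[of _ h]) (simp add: h)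
      then show ?thesis using annihilates[of "\<lambda>v. 1 * (h v - xs v)"] cone_K by auto
    qed
    then show ?thesis using mem_lineality_iff_subgradients_agree by blast
  qed
  then have "annihilator T lineality \<subseteq> ?K"
    by (rule annihilator_subset_closed_subspace[OF closedin_closure_of K])
  then show "?K = annihilator T lineality" using closure_cone_subset_annihilator by blast
qed (simp add: dual_subspace_annihilator)

lemma closure_quot_cone_eq_vdual_iff:
  "wstar (Xquot T lineality) closure_of
      cone_diff (Xquot T lineality) (subdiff0 (Xquot T lineality) (ghat g xs)) (dzero (Xquot T lineality))
     = vdual (Xquot T lineality) \<longleftrightarrow>
   wstar (Xs T) closure_of cone_diff (Xs T) (subdiff0 (Xs T) g) xs = annihilator T lineality"
  (is "?KQ = vdual ?Q \<longleftrightarrow> ?K = ?A")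
proof -
  let ?C = "cone_diff ?Q (subdiff0 ?Q (ghat g xs)) (dzero ?Q)"
  have hom: "homeomorphic_map (wstar ?Q) (subtopology (wstar (Xs T)) ?A) (quot_lift lineality)"
    using homeomorphic_maps_quot_dual[OF subspace_lineality] homeomorphic_maps_map by blast
  have "quot_lift lineality ` ?KQ = subtopology (wstar (Xs T)) ?A closure_of (quot_lift lineality ` ?C)"
    using homeomorphic_map_closure_of[OF hom] quot_cone_subset_vdual by (simp add: topspace_wstar)
  also have "\<dots> = ?K"
    unfolding quot_lift_cone closure_of_subtopology
    using cone_subset_annihilator closure_cone_subset_annihilator by (simp add: Int_absorb1)
  finally have closure: "quot_lift lineality ` ?KQ = ?K" .
  have "quot_lift lineality ` vdual ?Q = ?A"
    using homeomorphic_imp_surjective_map[OF hom] by (auto simp: topspace_wstar annihilator_def)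
  moreover have "inj_on (quot_lift lineality) (vdual ?Q)"
    using homeomorphic_imp_injective_map[OF hom] by (simp add: topspace_wstar)
  moreover have "?KQ \<subseteq> vdual ?Q" using closure_of_subset_topspace by (metis topspace_wstar)
  ultimately show ?thesis using closure inj_on_image_eq_iff by (metis order_refl)
qed

lemma ghat_proper: "vproper (Xquot T lineality) (ghat g xs)"
  unfolding vproper_def vcarrier_Xquot
proof (intro conjI ballI)
  show "ghat g xs A \<noteq> -\<infinity>" if A: "A \<in> range (coset lineality)" for A
  proof -
    obtain x where "A = coset lineality x" using A by blast
    then show ?thesis using ghat_coset g_shift_nonneg[of x] by auto
  qed
  have "ghat g xs (coset lineality 0) \<noteq> \<infinity>" using ghat_coset[of 0] g_shift_zero by simp
  then show "\<exists>A\<in>range (coset lineality). ghat g xs A \<noteq> \<infinity>" by blast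
qed

lemma ghat_lsc: "vlsc (Xquot T lineality) (ghat g xs)"
  unfolding vlsc_def vtop_Xquot topspace_quot_top
proof
  fix t :: ereal
  have "openin T {x. t < g_shift x}"
  proof (cases t)
    case (real c)
    then show ?thesis using g_shift_lsc by simp
  next
    case MInf
    then have "{x. t < g_shift x} = topspace T"
      using g_shift_nonneg hlcs_topspace[OF hlcs] by (auto intro: less_le_trans[of "-\<infinity>" 0])
    then show ?thesis by simp
  qed simp
  moreover have "{x \<in> topspace T. coset lineality x \<in> {A \<in> range (coset lineality). t < ghat g xs A}}
      = {x. t < g_shift x}"
    using hlcs_topspace[OF hlcs] ghat_coset by auto
  ultimately show "openin (quot_top T lineality) {A \<in> range (coset lineality). t < ghat g xs A}"
    unfolding openin_quot_top by simp
qed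

lemma ghat_sublinear: "vsublinear (Xquot T lineality) (ghat g xs)"
  unfolding vsublinear_def vcarrier_Xquot vzero_Xquot
proof (intro conjI allI ballI impI)
  show "ghat g xs (coset lineality 0) = 0" using ghat_coset g_shift_zero by simp
  fix A B assume "A \<in> range (coset lineality)" "B \<in> range (coset lineality)"
  then obtain x y where "A = coset lineality x" "B = coset lineality y" by blast
  then show "ghat g xs (vadd (Xquot T lineality) A B) \<le> ghat g xs A + ghat g xs B"
    using vadd_Xquot_coset[OF subspace_lineality] ghat_coset g_shift_add by simp
next
  fix t :: real and A assume "A \<in> range (coset lineality)" "0 < t"
  then obtain x where "A = coset lineality x" by blast
  then show "ghat g xs (vscale (Xquot T lineality) t A) = ereal t * ghat g xs A"
    using vscale_Xquot_coset[OF subspace_lineality] ghat_coset g_shift_scaleR[OF \<open>0 < t\<close>] by simp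
qed

lemma ghat_nonneg: "\<forall>A\<in>vcarrier (Xquot T lineality). 0 \<le> ghat g xs A"
  unfolding vcarrier_Xquot using ghat_coset g_shift_nonneg by auto

lemma Lsp_ghat: "Lsp (Xquot T lineality) (ghat g xs) = {vzero (Xquot T lineality)}"
proof -
  define u where "u = (SOME u. u \<in> subdiff0 (Xquot T lineality) (ghat g xs))"
  have "u \<in> subdiff0 (Xquot T lineality) (ghat g xs)"
    unfolding u_def by (rule someI[of _ "dzero (Xquot T lineality)"]) (rule dzero_Xquot_subgradient)
  then have lift: "quot_lift lineality u \<in> annihilator T lineality"
    using quot_lift_annihilator[OF subspace_lineality] unfolding subdiff0_Xquot_iff by blast
  have coset_trivial: "coset lineality x = coset lineality 0"
    if "g_shift x = ereal (u (coset lineality x))" "g_shift (- x) = ereal (- u (coset lineality x))" for x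
  proof -
    have "u (coset lineality x) = 0"
      using that g_shift_nonneg[of x] g_shift_nonneg[of "- x"] by auto
    then have "x \<in> lineality" using that unfolding mem_lineality_iff by simp
    then show ?thesis by (simp add: coset_eq_iff[OF subspace_lineality])
  qed
  have u0: "u (coset lineality 0) = 0"
    using lift unfolding annihilator_def quot_lift_def vdual_Xs_iff by (auto dest: linear_0)
  have "{A \<in> range (coset lineality). ghat g xs A = ereal (u A) \<and>
      ghat g xs (vneg (Xquot T lineality) A) = ereal (- u A)} = {coset lineality 0}"
  proof (rule set_eqI, rule iffI)
    fix A assume "A \<in> {A \<in> range (coset lineality). ghat g xs A = ereal (u A) \<and>
      ghat g xs (vneg (Xquot T lineality) A) = ereal (- u A)}"
    then obtain x where A: "A = coset lineality x"
      and "ghat g xs A = ereal (u A)" "ghat g xs (vneg (Xquot T lineality) A) = ereal (- u A)"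
      by blast
    then have "g_shift x = ereal (u (coset lineality x))" "g_shift (- x) = ereal (- u (coset lineality x))"
      by (simp_all add: ghat_coset vneg_Xquot_coset[OF subspace_lineality])
    then show "A \<in> {coset lineality 0}" using coset_trivial A by simp
  next
    fix A assume "A \<in> {coset lineality 0}"
    then show "A \<in> {A \<in> range (coset lineality). ghat g xs A = ereal (u A) \<and>
      ghat g xs (vneg (Xquot T lineality) A) = ereal (- u A)}"
      using u0 by (simp add: ghat_coset vneg_Xquot_coset[OF subspace_lineality] g_shift_zero)
  qed
  then show ?thesis unfolding Lsp_def Let_def u_def[symmetric] vcarrier_Xquot vzero_Xquot .
qed

lemma qri_iff_qi:
  "xs \<in> qri (Xs T) (subdiff0 (Xs T) g) \<longleftrightarrow>
     dzero (Xquot T lineality) \<in> qi (Xquot T lineality) (subdiff0 (Xquot T lineality) (ghat g xs))"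
  unfolding qri_def qi_def using xs_subgradient dzero_Xquot_subgradient
  by (simp add: dual_subspace_closure_cone_iff closure_quot_cone_eq_vdual_iff)

end

theorem proposition9:
  fixes T :: "'a::real_vector topology"
    and g :: "'a \<Rightarrow> ereal"
    and xs :: "'a \<Rightarrow> real"
  assumes X: "is_hlcs (Xs T)"
    and nontriv: "\<exists>x::'a. x \<noteq> 0"
    and gGamma: "Gamma (Xs T) g"
    and gsub: "vsublinear (Xs T) g"
    and xs: "xs \<in> subdiff0 (Xs T) g"
  defines "L \<equiv> {x. g x = ereal (xs x) \<and> g (- x) = ereal (- xs x)}"
  shows "vproper (Xquot T L) (ghat g xs) \<and>
         vlsc (Xquot T L) (ghat g xs) \<and>
         vsublinear (Xquot T L) (ghat g xs) \<and>
         (\<forall>A\<in>vcarrier (Xquot T L). ghat g xs A \<ge> 0) \<and>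
         Lsp (Xquot T L) (ghat g xs) = {vzero (Xquot T L)} \<and>
         (xs \<in> qri (Xs T) (subdiff0 (Xs T) g) \<longleftrightarrow>
            dzero (Xquot T L) \<in> qi (Xquot T L) (subdiff0 (Xquot T L) (ghat g xs)))"
proof -
  interpret sublinear_quotient T g xs
    by unfold_locales (fact X gGamma gsub xs)+
  have "L = lineality" unfolding L_def lineality_def ..
  then show ?thesis
    using ghat_proper ghat_lsc ghat_sublinear ghat_nonneg Lsp_ghat qri_iff_qi by simp
qed

end
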